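(* Let $g,f,h$ be as in the parametrization, $S=g^{-1}h$, and for a fixed integer $k$ let $V_g:=Y_k(S)$ and $V_f:=Y_{d-k}(S^{-1})$, viewed as mixed tensors $(V_g)^\mu{}_\nu$, $(V_f)^\mu{}_\nu$. Then the projections of $V_g$ relative to the Eulerian observer of $g$ are $$\boldsymbol\rho[V_g]=-e_k(B),\qquad \boldsymbol j[V_g]_i=-\gamma_{il}W^l{}_r\mathsf n^r,\qquad \boldsymbol J[V_g]^i{}_l=\big(\mathcal V\,I-W+\tfrac{M}{N}U\big)^i{}_l,$$ and the projections of $V_f$ relative to the Eulerian observer of $f$ are $$\boldsymbol\rho[V_f]=-\lambda\,e_{k-1}(\tilde D)\det(em^{-1}),\quad \boldsymbol j[V_f]_i=-\boldsymbol j[V_g]_i\det(em^{-1}),\quad \boldsymbol J[V_f]^i{}_l=\big(\tilde{\mathcal V} I-\tilde Q U+\tfrac{N}{M}\tilde U\big)^i{}_l\det(em^{-1}).$$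
   Context: $s=d-1\ge1$. $e_k(X)$ via $\det(I+tX)=\sum_ke_k(X)t^k$ ($e_k=0$ for $k<0$); $Y_k(X)=\sum_{i=0}^k(-1)^{k+i}e_i(X)X^{k-i}$, $Y_{-1}=0$. Data: $N,M>0$, $q,v\in\mathbb R^s$ with $v^{\mathsf T}v<1$, $\lambda=(1-v^{\mathsf T}v)^{-1/2}$, $\hat\Lambda=(I-vv^{\mathsf T})^{-1/2}$, $e,m$ invertible $s\times s$ with $\chi=e^{\mathsf T}\hat\Lambda m$ symmetric positive definite; $\gamma=e^{\mathsf T}e$, $\varphi=m^{\mathsf T}m$, $\mathsf n=e^{-1}v$, $Q=e^{-1}\hat\Lambda^2e$, $\tilde Q=m^{-1}\hat\Lambda^2m$, $\tilde D=e^{-1}\hat\Lambda^{-1}m$, $B=e^{-1}\hat\Lambda m$, $U=\lambda^{-1}Y_{k-1}(B)$, $\tilde U=\tilde DY_{k-1}(\tilde D)$, $W=BY_{k-1}(\tilde D)$, $\mathcal V=e_k(\tilde D)$, $\tilde{\mathcal V}=\lambda^{-1}e_{k-1}(B)$. With $\Xi[\xi]=\begin{pmatrix}1&0\\\xi&I_s\end{pmatrix}$, $H^2=NM/\lambda$, shifts $\vec N=q+Ne^{-1}v$, $\vec M=q-Mm^{-1}v$: $h=\Xi[q]^{\mathsf T}\mathrm{diag}(-H^2,\chi)\Xi[q]$, $g=\Xi[\vec N]^{\mathsf T}\mathrm{diag}(-N^2,\gamma)\Xi[\vec N]$, $f=\Xi[\vec M]^{\mathsf T}\mathrm{diag}(-M^2,\varphi)\Xi[\vec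 M]$. Projections relative to a metric $G$ with lapse $A$ and shift $\vec A$ and spatial metric $\sigma$: unit normal $n_\mu=(-A,0)$, $n^\mu=(A^{-1},-A^{-1}\vec A)$, projector $\perp^\mu{}_\nu=\delta^\mu_\nu+n^\mu n_\nu$; for a mixed tensor $X^\mu{}_\nu$ with $X_{\mu\nu}=G_{\mu\alpha}X^\alpha{}_\nu$: $\boldsymbol\rho[X]=n^\mu X_{\mu\nu}n^\nu$, $\boldsymbol j[X]_\nu=-\perp^\rho{}_\nu X_{\rho\sigma}n^\sigma$, $\boldsymbol J[X]_{\mu\nu}=\perp^\rho{}_\mu X_{\rho\sigma}\perp^\sigma{}_\nu$, with spatial components taken in the coordinates $x^i$ and indices raised by $\sigma^{-1}$. For $V_g$ use $G=g$ ($A=N$, $\sigma=\gamma$), for $V_f$ use $G=f$ ($A=M$, $\sigma=\varphi$). *)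

theory Defs
  imports "HOL-Analysis.Analysis" "HOL-Computational_Algebra.Polynomial"
begin

primrec mpow :: "real^('n::finite)^'n \<Rightarrow> nat \<Rightarrow> real^('n::finite)^'n" where
  "mpow X 0 = mat 1"
| "mpow X (Suc n) = X ** mpow X n"

definition detpoly :: "real^('n::finite)^'n \<Rightarrow> real poly" where
  "detpoly X = (THE p. \<forall>t. poly p t = det (mat 1 + t *\<^sub>R X))"

definition esym :: "int \<Rightarrow> real^('n::finite)^'n \<Rightarrow> real" where
  "esym k X = (if k < 0 then 0 else coeff (detpoly X) (nat k))"

definition Ymat :: "int \<Rightarrow> real^('n::finite)^'n \<Rightarrow> real^('n::finite)^'n" where
  "Ymat k X = (\<Sum>i\<in>{0..k}. ((-1) ^ nat (k + i) * esym i X) *\<^sub>R mpow X (nat (k - i)))"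

definition posdef :: "real^('n::finite)^'n \<Rightarrow> bool" where
  "posdef A \<longleftrightarrow> transpose A = A \<and> (\<forall>x. x \<noteq> 0 \<longrightarrow> x \<bullet> (A *v x) > 0)"

definition inv_sqrt :: "real^('n::finite)^'n \<Rightarrow> real^('n::finite)^'n" where
  "inv_sqrt X = (THE R. posdef R \<and> R ** R = matrix_inv X)"

definition outer :: "real^'n \<Rightarrow> real^'n \<Rightarrow> real^('n::finite)^'n" where
  "outer u w = (\<chi> i j. u $ i * w $ j)"

(* d = s+1 dimensional objects: index type 's option, None = time index 0 *)
definition Xi :: "real^('s::finite) \<Rightarrow> real^('s option)^('s option)" where
  "Xi \<xi> = (\<chi> a b. case (a, b) of (None, None) \<Rightarrow> 1 | (None, Some j) \<Rightarrow> 0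
                   | (Some i, None) \<Rightarrow> \<xi> $ i | (Some i, Some j) \<Rightarrow> (if i = j then 1 else 0))"

definition blockdiag :: "real \<Rightarrow> real^('s::finite)^'s \<Rightarrow> real^('s option)^('s option)" where
  "blockdiag a X = (\<chi> p q. case (p, q) of (None, None) \<Rightarrow> a
                   | (Some i, Some j) \<Rightarrow> X $ i $ j | _ \<Rightarrow> 0)"

definition adm :: "real \<Rightarrow> real^('s::finite)^'s \<Rightarrow> real^('s::finite) \<Rightarrow> real^('s option)^('s option)" where
  "adm a X \<xi> = transpose (Xi \<xi>) ** blockdiag a X ** Xi \<xi>"

definition nup :: "real \<Rightarrow> real^('s::finite) \<Rightarrow> real^('s::finite option)" where
  "nup A sh = (\<chi> p. case p of None \<Rightarrow> 1 / A | Some i \<Rightarrow> - sh $ i / A)"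

definition ndn :: "real \<Rightarrow> real^('s::finite option)" where
  "ndn A = (\<chi> p. case p of None \<Rightarrow> - A | Some i \<Rightarrow> 0)"

definition perp :: "real \<Rightarrow> real^('s::finite) \<Rightarrow> real^('s option)^('s option)" where
  "perp A sh = (\<chi> p q. (if p = q then 1 else 0) + nup A sh $ p * ndn A $ q)"

(* rho[X] = n^mu X_{mu nu} n^nu with X_{mu nu} = G_{mu alpha} X^alpha_nu *)
definition proj_rho :: "real^('s option)^('s option) \<Rightarrow> real \<Rightarrow> real^('s::finite)
     \<Rightarrow> real^('s option)^('s option) \<Rightarrow> real" where
  "proj_rho G A sh X = nup A sh \<bullet> ((G ** X) *v nup A sh)"

(* spatial components j_i of j[X]_nu = - perp^rho_nu X_{rho sigma} n^sigma *)
definition proj_j :: "real^('s option)^('s option) \<Rightarrow> real \<Rightarrow> real^('s::finite)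
     \<Rightarrow> real^('s option)^('s option) \<Rightarrow> real^('s::finite)" where
  "proj_j G A sh X = (\<chi> i. - ((transpose (perp A sh) *v ((G ** X) *v nup A sh)) $ Some i))"

(* spatial components J^i_l = (sigma^{-1})^{ij} J_{jl},
   J_{mu nu} = perp^rho_mu X_{rho sigma} perp^sigma_nu *)
definition proj_J :: "real^('s option)^('s option) \<Rightarrow> real \<Rightarrow> real^('s::finite) \<Rightarrow> real^('s::finite)^'s
     \<Rightarrow> real^('s option)^('s option) \<Rightarrow> real^('s::finite)^'s" where
  "proj_J G A sh \<sigma> X = matrix_inv \<sigma> **
      (\<chi> i l. (transpose (perp A sh) ** (G ** X) ** perp A sh) $ Some i $ Some l)"

end

theory Submission
  imports Defs
begin

text \<open>
  In the orthonormal frame \<open>E\<close> of \<open>g\<close> (so \<open>g = E\<^sup>T \<eta> E\<close>), the matrix \<open>S = g\<^sup>-\<^sup>1h\<close> becomes the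
  bordered matrix \<open>[[a - v\<^sup>TPv, (Pv)\<^sup>T], [-Pv, P]]\<close> with \<open>P = \<Lambda>\<^sup>^ m e\<^sup>-\<^sup>1\<close>, which is symmetric
  because \<open>\<chi>\<close> is. For such a matrix \<open>Y\<^sub>k\<close> can be computed in closed form from the recursion
  \<open>Y\<^sub>k(X) = e\<^sub>k(X) I - X Y\<^sub>k\<^sub>-\<^sub>1(X)\<close>, using the rank-one update formulas for \<open>e\<^sub>k\<close> and \<open>Y\<^sub>k\<close>,
  which in turn come from Cayley--Hamilton in the form \<open>adj(I + tX) = \<Sum>\<^sub>j t\<^sup>j Y\<^sub>j(X)\<close>. The projections of
  a tensor \<open>E\<^sup>-\<^sup>1 [[y, r\<^sup>T], [c, \<Sigma>]] E\<close> are simply \<open>-y\<close>, \<open>-e\<^sup>Tc\<close> and \<open>e\<^sup>-\<^sup>1\<Sigma> e\<close>.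

  The frames of \<open>g\<close> and \<open>f\<close> differ by the Lorentz boost with velocity \<open>v\<close>, which yields
  \<open>h f\<^sup>-\<^sup>1 h = g\<close>, i.e. \<open>S\<^sup>-\<^sup>1 = f\<^sup>-\<^sup>1h\<close>. In the frame of \<open>f\<close>, \<open>S\<^sup>-\<^sup>1\<close> has the same bordered form with
  \<open>v\<close> replaced by \<open>-v\<close>, and the inversion formula \<open>Y\<^sub>n\<^sub>-\<^sub>k(X\<^sup>-\<^sup>1) = X Y\<^sub>k\<^sub>-\<^sub>1(X) / det X\<close> turns
  the projections of \<open>V\<^sub>f\<close> into expressions in \<open>B\<close> and \<open>D\<^sup>~\<close>.
\<close>

section \<open>The polynomial det(I + tX) and the elementary symmetric functions\<close>

lemma poly_det:
  fixes A :: "real poly^'n::finite^'n"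
  shows "poly (det A) t = det (\<chi> i j. poly (A $ i $ j) t)"
  unfolding det_def by (simp add: poly_sum poly_prod of_int_poly)

lemma degree_det_le_sum:
  fixes A :: "real poly^'n::finite^'n"
  assumes "\<And>i j. degree (A $ i $ j) \<le> w j"
  shows "degree (det A) \<le> sum w UNIV"
  unfolding det_def
proof (rule degree_sum_le)
  show "finite {p. p permutes (UNIV::'n set)}" by (simp add: finite_permutations)
  fix p assume "p \<in> {p. p permutes (UNIV::'n set)}"
  hence p: "p permutes (UNIV::'n set)" by simp
  have "degree (of_int (sign p) * (\<Prod>i\<in>UNIV. A $ i $ p i)) \<le> degree (\<Prod>i\<in>UNIV. A $ i $ p i)"
    by (metis degree_mult_le degree_of_int add_0)
  also have "\<dots> \<le> sum (degree \<circ> (\<lambda>i. A $ i $ p i)) UNIV"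
    by (rule degree_prod_sum_le) simp
  also have "\<dots> \<le> sum (\<lambda>i. w (p i)) UNIV"
    by (rule sum_mono) (simp add: assms)
  also have "\<dots> = sum w UNIV"
    using sum.reindex_bij_betw[OF permutes_imp_bij[OF p], of w] by simp
  finally show "degree (of_int (sign p) * (\<Prod>i\<in>UNIV. A $ i $ p i)) \<le> sum w UNIV" .
qed

lemma poly_eqI_cofinite:
  fixes p q :: "real poly"
  assumes "finite F" and "\<And>t. t \<notin> F \<Longrightarrow> poly p t = poly q t"
  shows "p = q"
proof -
  have "infinite (UNIV - F)"
    using assms(1) by (simp add: Diff_infinite_finite infinite_UNIV_char_0)
  moreover have "UNIV - F \<subseteq> {t. poly (p - q) t = 0}" using assms(2) by auto
  ultimately have "infinite {t. poly (p - q) t = 0}" using finite_subset by blast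
  hence "p - q = 0" using poly_roots_finite by blast
  thus ?thesis by simp
qed

definition pencil :: "real^'n^'n \<Rightarrow> real poly^'n^('n::finite)" where
  "pencil X = (\<chi> i j. [:if i = j then 1 else 0, X $ i $ j:])"

lemma poly_det_pencil: "poly (det (pencil X)) t = det (mat 1 + t *\<^sub>R X)"
  unfolding poly_det pencil_def
  by (rule arg_cong[where f=det]) (simp add: vec_eq_iff mat_def algebra_simps)

lemma detpoly_eq: "detpoly X = det (pencil X)"
  unfolding detpoly_def
proof (rule the_equality)
  show "\<forall>t. poly (det (pencil X)) t = det (mat 1 + t *\<^sub>R X)" by (simp add: poly_det_pencil)
  fix p assume "\<forall>t. poly p t = det (mat 1 + t *\<^sub>R X)"
  hence "poly p = poly (det (pencil X))" by (simp add: fun_eq_iff poly_det_pencil)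
  thus "p = det (pencil X)" by (simp add: poly_eq_poly_eq_iff)
qed

lemma poly_detpoly: "poly (detpoly X) t = det (mat 1 + t *\<^sub>R X)"
  by (simp add: detpoly_eq poly_det_pencil)

lemma degree_detpoly: "degree (detpoly (X::real^'n^('n::finite))) \<le> CARD('n)"
proof -
  have "degree (det (pencil X)) \<le> sum (\<lambda>j. 1::nat) (UNIV::'n set)"
    by (rule degree_det_le_sum) (simp add: pencil_def)
  thus ?thesis by (simp add: detpoly_eq)
qed

lemma detpoly_eqI:
  "(\<And>t. det (mat 1 + t *\<^sub>R X) = det (mat 1 + t *\<^sub>R Y)) \<Longrightarrow> detpoly X = detpoly Y"
proof -
  assume "\<And>t. det (mat 1 + t *\<^sub>R X) = det (mat 1 + t *\<^sub>R Y)"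
  hence "poly (detpoly X) = poly (detpoly Y)" by (simp add: fun_eq_iff poly_detpoly)
  thus ?thesis by (simp add: poly_eq_poly_eq_iff)
qed

lemma esym_eqI:
  "(\<And>t. det (mat 1 + t *\<^sub>R X) = det (mat 1 + t *\<^sub>R Y)) \<Longrightarrow> esym k X = esym k Y"
proof -
  assume "\<And>t. det (mat 1 + t *\<^sub>R X) = det (mat 1 + t *\<^sub>R Y)"
  hence "detpoly X = detpoly Y" by (rule detpoly_eqI)
  thus ?thesis by (simp add: esym_def)
qed

lemma esym_neg [simp]: "k < 0 \<Longrightarrow> esym k X = 0"
  by (simp add: esym_def)

lemma esym_eq_0_above: "int CARD('n) < k \<Longrightarrow> esym k (X::real^'n^('n::finite)) = 0"
  using degree_detpoly[of X] by (simp add: esym_def coeff_eq_0)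

lemma esym_0 [simp]: "esym 0 X = 1"
  using poly_0_coeff_0[of "detpoly X"] by (simp add: esym_def poly_detpoly)

lemma det_id_plus_scaleR_esym:
  "det (mat 1 + t *\<^sub>R (X::real^'n^('n::finite))) = (\<Sum>j\<le>CARD('n). esym (int j) X * t ^ j)"
proof -
  have "det (mat 1 + t *\<^sub>R X) = poly (detpoly X) t" by (simp add: poly_detpoly)
  also have "\<dots> = (\<Sum>i\<le>degree (detpoly X). coeff (detpoly X) i * t ^ i)"
    by (rule poly_altdef)
  also have "\<dots> = (\<Sum>j\<le>CARD('n). coeff (detpoly X) j * t ^ j)"
  proof (rule sum.mono_neutral_left)
    show "{..degree (detpoly X)} \<subseteq> {..CARD('n)}" using degree_detpoly[of X] by auto
    show "\<forall>i\<in>{..CARD('n)} - {..degree (detpoly X)}. coeff (detpoly X) i * t ^ i = 0"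
      by (simp add: coeff_eq_0)
  qed simp
  also have "\<dots> = (\<Sum>j\<le>CARD('n). esym (int j) X * t ^ j)"
    unfolding esym_def by simp
  finally show ?thesis .
qed

lemma finite_det_id_plus_scaleR_eq_0:
  "finite {t. det (mat 1 + t *\<^sub>R (X::real^'n^('n::finite))) = 0}"
proof -
  have "detpoly X \<noteq> 0"
    using poly_detpoly[of X 0] by auto
  hence "finite {t. poly (detpoly X) t = 0}" by (rule poly_roots_finite)
  thus ?thesis by (simp add: poly_detpoly)
qed

lemma matrix_add_rdistrib: "((A::real^'n^'m) + B) ** C = A ** C + B ** C"
  by (simp add: matrix_matrix_mult_def vec_eq_iff sum.distrib algebra_simps)

lemma matrix_diff_rdistrib: "((A::real^'n^'m) - B) ** C = A ** C - B ** C"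
  by (simp add: matrix_matrix_mult_def vec_eq_iff sum_subtractf algebra_simps)

lemma matrix_diff_ldistrib: "(A::real^'n^'m) ** (B - C) = A ** B - A ** C"
  by (simp add: matrix_matrix_mult_def vec_eq_iff sum_subtractf algebra_simps)

lemma matrix_neg_mul: "(- (A::real^'n^'m)) ** C = - (A ** C)"
  by (simp add: matrix_matrix_mult_def vec_eq_iff sum_negf)

lemma matrix_mul_neg: "(A::real^'n^'m) ** (- C) = - (A ** C)"
  by (simp add: matrix_matrix_mult_def vec_eq_iff sum_negf)

lemma matrix_scaleR_mul: "(c *\<^sub>R (A::real^'n^'m)) ** C = c *\<^sub>R (A ** C)"
  by (simp add: scalar_matrix_assoc)

lemma matrix_mul_scaleR: "(A::real^'n^'m) ** (c *\<^sub>R C) = c *\<^sub>R (A ** C)"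
  by (simp add: matrix_scalar_ac scalar_matrix_assoc)

lemma matrix_sum_mul: "(sum f S :: real^'n^'m) ** C = (\<Sum>i\<in>S. f i ** C)"
  by (induction S rule: infinite_finite_induct) (auto simp: matrix_add_rdistrib)

lemma matrix_mul_sum: "(C::real^'n^'m) ** (sum f S) = (\<Sum>i\<in>S. C ** f i)"
  by (induction S rule: infinite_finite_induct) (auto simp: matrix_add_ldistrib)

lemma matrix_mul_mat: "(A::real^'n^'m) ** mat c = c *\<^sub>R A"
  by (simp add: matrix_matrix_mult_def mat_def vec_eq_iff if_distrib if_distribR sum.delta'
      mult.commute cong: if_cong)

lemma mat_matrix_mul: "mat c ** (A::real^'n^'m) = c *\<^sub>R A"
  by (simp add: matrix_matrix_mult_def mat_def vec_eq_iff if_distrib if_distribR sum.delta'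
      cong: if_cong)

lemmas matrix_mul_algebra = matrix_add_rdistrib matrix_diff_rdistrib matrix_diff_ldistrib
  matrix_add_ldistrib matrix_neg_mul matrix_mul_neg matrix_scaleR_mul matrix_mul_scaleR
  matrix_mul_mat mat_matrix_mul matrix_mul_lid matrix_mul_rid

lemma matrix_vector_mult_sum: "(sum f S :: real^'n^'m) *v x = (\<Sum>j\<in>S. f j *v x)"
  by (induction S rule: infinite_finite_induct) (auto simp: matrix_vector_mult_add_rdistrib)

lemma scaleR_matrix_vector_mult: "(c *\<^sub>R (A::real^'n^'m)) *v x = c *\<^sub>R (A *v x)"
  by (simp add: vec_eq_iff matrix_vector_mult_def sum_distrib_left algebra_simps)

lemma matrix_vector_mult_neg: "(A::real^'n^'m) *v (- x) = - (A *v x)"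
  by (simp add: vec_eq_iff matrix_vector_mult_def sum_negf)

lemma inner_matrix_vector_mult: "((A::real^'n^('n::finite)) *v x) \<bullet> y = x \<bullet> (transpose A *v y)"
  by (simp add: inner_vec_def matrix_vector_mult_def transpose_def sum_distrib_left
      sum_distrib_right mult_ac) (rule sum.swap)

lemma transpose_add: "transpose (A + B) = transpose A + transpose (B::real^'n^'m)"
  by (simp add: transpose_def vec_eq_iff)

lemma transpose_diff: "transpose (A - B) = transpose A - transpose (B::real^'n^'m)"
  by (simp add: transpose_def vec_eq_iff)

lemma transpose_sum: "transpose (sum f S) = (\<Sum>i\<in>S. transpose (f i :: real^'n^'m))"
  by (induction S rule: infinite_finite_induct) (auto simp: transpose_add transpose_def vec_eq_iff)

lemma matrix_inv_unique:
  fixes A B :: "real^'n^('n::finite)"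
  assumes "A ** B = mat 1"
  shows "matrix_inv A = B"
proof -
  have BA: "B ** A = mat 1" using assms matrix_left_right_inverse by blast
  have "A ** matrix_inv A = mat 1 \<and> matrix_inv A ** A = mat 1"
    unfolding matrix_inv_def by (rule someI[of _ B]) (use assms BA in blast)
  hence "matrix_inv A = (B ** A) ** matrix_inv A" and "A ** matrix_inv A = mat 1" using BA by simp_all
  thus ?thesis by (simp add: matrix_mul_assoc[symmetric])
qed

lemma matrix_inv_right: "invertible (A::real^'n^('n::finite)) \<Longrightarrow> A ** matrix_inv A = mat 1"
  unfolding invertible_def matrix_inv_def by (rule conjunct1[OF someI_ex]) blast

lemma matrix_inv_left: "invertible (A::real^'n^('n::finite)) \<Longrightarrow> matrix_inv A ** A = mat 1"
  unfolding invertible_def matrix_inv_def by (rule conjunct2[OF someI_ex]) blast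

lemma invertibleI: "(A::real^'n^('n::finite)) ** B = mat 1 \<Longrightarrow> invertible A"
  using invertible_right_inverse by blast

lemma invertible_matrix_inv: "invertible (A::real^'n^('n::finite)) \<Longrightarrow> invertible (matrix_inv A)"
  using matrix_inv_left invertibleI by blast

lemma matrix_inv_matrix_inv: "invertible (A::real^'n^('n::finite)) \<Longrightarrow> matrix_inv (matrix_inv A) = A"
  using matrix_inv_left matrix_inv_unique by blast

lemma matrix_inv_mult:
  "invertible (A::real^'n^('n::finite)) \<Longrightarrow> invertible (B::real^'n^'n)
    \<Longrightarrow> matrix_inv (A ** B) = matrix_inv B ** matrix_inv A"
  by (rule matrix_inv_unique) (metis matrix_inv_right matrix_mul_assoc matrix_mul_rid)

lemma det_matrix_inv: "invertible (A::real^'n^('n::finite)) \<Longrightarrow> det (matrix_inv A) = 1 / det A"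
  using det_mul[of A "matrix_inv A"] matrix_inv_right[of A] invertible_det_nz[of A]
  by (simp add: field_simps)

lemma matrix_inv_transpose:
  "invertible (A::real^'n^('n::finite)) \<Longrightarrow> matrix_inv (transpose A) = transpose (matrix_inv A)"
  by (rule matrix_inv_unique) (metis matrix_inv_left matrix_transpose_mul transpose_mat)

lemma det_scaleR: "det (c *\<^sub>R (A::real^'n^('n::finite))) = c ^ CARD('n) * det A"
proof -
  have "c *\<^sub>R A = mat c ** A" by (simp add: mat_matrix_mul)
  thus ?thesis by (simp add: det_mul det_diagonal mat_def)
qed

lemma invertible_if_quadratic_form_pos:
  fixes A :: "real^'n^('n::finite)"
  assumes "\<And>x. x \<noteq> 0 \<Longrightarrow> x \<bullet> (A *v x) > 0"
  shows "invertible A"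
proof -
  have "inj ((*v) A)"
  proof (rule injI)
    fix x y assume "A *v x = A *v y"
    hence "A *v (x - y) = 0" by (simp add: matrix_vector_mult_diff_distrib)
    hence "(x - y) \<bullet> (A *v (x - y)) = 0" by simp
    thus "x = y" using assms[of "x - y"] by (cases "x - y = 0") auto
  qed
  hence "det (matrix ((*v) A)) \<noteq> 0" by (subst det_nz_iff_inj) auto
  thus ?thesis by (simp add: invertible_det_nz)
qed

lemma outer_zero [simp]: "outer 0 w = 0" "outer u 0 = 0"
  by (simp_all add: outer_def vec_eq_iff)

lemma outer_matrix_vector_mult: "outer u w *v x = (w \<bullet> x) *\<^sub>R u"
  by (simp add: outer_def vec_eq_iff matrix_vector_mult_def inner_vec_def sum_distrib_left
      algebra_simps)

lemma matrix_mul_outer: "(A::real^'n^('n::finite)) ** outer u w = outer (A *v u) w"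
  by (simp add: outer_def vec_eq_iff matrix_matrix_mult_def matrix_vector_mult_def
      sum_distrib_right sum_distrib_left mult_ac)

lemma outer_matrix_mul: "outer u w ** (A::real^'n^('n::finite)) = outer u (transpose A *v w)"
  by (simp add: outer_def vec_eq_iff matrix_matrix_mult_def matrix_vector_mult_def transpose_def
      sum_distrib_left algebra_simps)

lemma outer_scaleR: "outer (c *\<^sub>R u) w = c *\<^sub>R outer u w" "outer u (c *\<^sub>R w) = c *\<^sub>R outer u w"
  by (simp_all add: outer_def vec_eq_iff)

lemma outer_mul_outer: "outer x y ** outer z w = (y \<bullet> z) *\<^sub>R outer x (w::real^'n::finite)"
  by (simp add: matrix_mul_outer outer_matrix_vector_mult outer_scaleR)

lemma outer_neg:
  "outer (- x) (- y) = outer x y" "outer (- x) y = - outer x y" "outer x (- y) = - outer x y"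
  by (simp_all add: outer_def vec_eq_iff)

lemma transpose_outer: "transpose (outer x y) = outer y x"
  by (simp add: outer_def transpose_def vec_eq_iff)

section \<open>The matrix polynomials \<open>Y\<^sub>k\<close>\<close>

lemma mpow_commute: "X ** mpow X n = mpow X n ** X"
  by (induction n) (simp_all add: matrix_mul_assoc)

lemma Ymat_neg: "k < 0 \<Longrightarrow> Ymat k X = 0"
  by (simp add: Ymat_def)

lemma Ymat_rec: "Ymat k X = esym k X *\<^sub>R mat 1 - X ** Ymat (k - 1) X"
proof (cases "k < 0")
  case True thus ?thesis by (simp add: Ymat_neg)
next
  case False
  have split: "{0..k} = insert k {0..k-1}" using False by auto
  have step: "((-1) ^ nat (k + i) * esym i X) *\<^sub>R mpow X (nat (k - i))
       = - (X ** (((-1) ^ nat (k - 1 + i) * esym i X) *\<^sub>R mpow X (nat (k - 1 - i))))"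
    if "i \<in> {0..k-1}" for i
  proof -
    from that have "nat (k + i) = Suc (nat (k - 1 + i))" "nat (k - i) = Suc (nat (k - 1 - i))"
      by auto
    thus ?thesis by (simp add: matrix_mul_scaleR)
  qed
  have "(-1::real) ^ nat (k + k) = 1"
    by (metis False mult_2 nat_mult_distrib power_minus1_even zero_le_numeral nat_numeral
        not_less add_mono_thms_linordered_semiring(1) even_mult_iff even_numeral)
  hence "Ymat k X = esym k X *\<^sub>R mat 1
        + (\<Sum>i\<in>{0..k-1}. ((-1) ^ nat (k + i) * esym i X) *\<^sub>R mpow X (nat (k - i)))"
    unfolding Ymat_def split by (simp add: sum.insert)
  also have "(\<Sum>i\<in>{0..k-1}. ((-1) ^ nat (k + i) * esym i X) *\<^sub>R mpow X (nat (k - i)))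
     = - (X ** Ymat (k-1) X)"
    unfolding Ymat_def matrix_mul_sum by (simp add: step sum_negf)
  finally show ?thesis by simp
qed

lemma Ymat_0: "Ymat 0 X = mat 1"
  using Ymat_rec[of 0 X] by (simp add: Ymat_neg)

lemma Ymat_commute: "X ** Ymat k X = Ymat k X ** X"
  unfolding Ymat_def matrix_mul_sum matrix_sum_mul
  by (rule sum.cong) (simp_all add: matrix_mul_scaleR matrix_scaleR_mul mpow_commute)

lemma Ymat_telescope:
  fixes X :: "real^'n^('n::finite)"
  shows "(mat 1 + t *\<^sub>R X) ** (\<Sum>j<m. t ^ j *\<^sub>R Ymat (int j) X)
      = (\<Sum>j<m. t ^ j * esym (int j) X) *\<^sub>R mat 1 + t ^ m *\<^sub>R (X ** Ymat (int m - 1) X)"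
proof (induction m)
  case 0 thus ?case by (simp add: Ymat_neg)
next
  case (Suc m)
  have "(mat 1 + t *\<^sub>R X) ** (\<Sum>j<Suc m. t ^ j *\<^sub>R Ymat (int j) X)
     = (mat 1 + t *\<^sub>R X) ** (\<Sum>j<m. t ^ j *\<^sub>R Ymat (int j) X)
       + (mat 1 + t *\<^sub>R X) ** (t ^ m *\<^sub>R Ymat (int m) X)"
    by (simp add: matrix_add_ldistrib)
  also have "\<dots> = (\<Sum>j<m. t ^ j * esym (int j) X) *\<^sub>R mat 1 + t ^ m *\<^sub>R (X ** Ymat (int m - 1) X)
        + (t ^ m *\<^sub>R Ymat (int m) X + t ^ Suc m *\<^sub>R (X ** Ymat (int m) X))"
    unfolding Suc.IH by (simp add: matrix_mul_algebra scaleR_add_right)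
  also have "\<dots> = (\<Sum>j<Suc m. t ^ j * esym (int j) X) *\<^sub>R mat 1
        + t ^ Suc m *\<^sub>R (X ** Ymat (int (Suc m) - 1) X)"
    by (simp add: Ymat_rec[of "int m" X] algebra_simps scaleR_add_left)
  finally show ?case .
qed

lemma id_plus_scaleR_mult_Ymat_sum:
  fixes X :: "real^'n^('n::finite)"
  shows "(mat 1 + t *\<^sub>R X) ** (\<Sum>j<CARD('n). t ^ j *\<^sub>R Ymat (int j) X)
      = det (mat 1 + t *\<^sub>R X) *\<^sub>R mat 1 - t ^ CARD('n) *\<^sub>R Ymat (int CARD('n)) X"
proof -
  have "det (mat 1 + t *\<^sub>R X) = (\<Sum>j<CARD('n). t ^ j * esym (int j) X) + t ^ CARD('n) * esym (int CARD('n)) X"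
    by (simp add: det_id_plus_scaleR_esym lessThan_Suc_atMost[symmetric] mult.commute)
  thus ?thesis
    unfolding Ymat_telescope by (simp add: Ymat_rec[of "int CARD('n)" X] algebra_simps scaleR_add_left)
qed

subsection \<open>Cayley--Hamilton\<close>

text \<open>Entry \<open>(k, j)\<close> is the \<open>(j, k)\<close> cofactor of the pencil \<open>I + tX\<close>: \<open>adjp X\<close> is its adjugate.\<close>

definition adjp :: "real^'n^'n \<Rightarrow> real poly^'n^('n::finite)" where
  "adjp X = (\<chi> k j. det (\<chi> a b. if b = k then [:if a = j then 1 else 0:] else pencil X $ a $ b))"

lemma degree_adjp: "degree (adjp X $ k $ j) \<le> CARD('n) - 1"
  for X :: "real^'n^('n::finite)"
proof -
  have "degree (adjp X $ k $ j) \<le> sum (\<lambda>b. if b = k then 0 else 1::nat) (UNIV::'n set)"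
    unfolding adjp_def by (simp, rule degree_det_le_sum) (simp add: pencil_def)
  also have "\<dots> = CARD('n) - 1"
    by (simp add: sum.If_cases card_Diff_singleton Compl_eq_Diff_UNIV)
  finally show ?thesis .
qed

lemma poly_pencil: "poly (pencil X $ i $ j) t = (mat 1 + t *\<^sub>R X) $ i $ j"
  by (simp add: pencil_def mat_def)

lemma poly_adjp:
  "poly (adjp X $ k $ j) t
    = det (\<chi> a b. if b = k then (if a = j then 1 else 0) else (mat 1 + t *\<^sub>R X) $ a $ b)"
  unfolding adjp_def vec_lambda_beta poly_det
  by (rule arg_cong[where f=det]) (simp add: vec_eq_iff poly_pencil)

lemma cramer_cofactor_sum:
  fixes A :: "real^'n^('n::finite)"
  assumes "det A \<noteq> 0"
  shows "(\<Sum>k\<in>UNIV. A$i$k * det (\<chi> a b. if b = k then (if a = j then 1 else 0) else A$a$b))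
         = det A * (if i = j then 1 else 0)"
proof -
  define b :: "real^'n" where "b = (\<chi> a. if a = j then 1 else 0)"
  define x :: "real^'n" where "x = (\<chi> k. det (\<chi> i j. if j = k then b$i else A$i$j) / det A)"
  obtain B where B: "A ** B = mat 1" using assms invertible_det_nz invertible_def by blast
  have Bb: "A *v (B *v b) = b" by (simp add: matrix_vector_mul_assoc B)
  hence "B *v b = x" unfolding x_def using cramer[OF assms] by blast
  hence "A *v x = b" using Bb by simp
  hence "(\<Sum>k\<in>UNIV. A$i$k * (det (\<chi> i j. if j = k then b$i else A$i$j) / det A)) = b $ i"
    by (simp add: matrix_vector_mult_def vec_eq_iff x_def)
  hence "(\<Sum>k\<in>UNIV. A$i$k * det (\<chi> i j. if j = k then b$i else A$i$j)) = det A * b $ i"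
    using assms by (simp add: sum_divide_distrib[symmetric] field_simps)
  moreover have "(\<chi> i j. if j = k then b$i else A$i$j)
      = (\<chi> a b. if b = k then (if a = j then 1 else 0) else A$a$b)" for k
    by (simp add: b_def vec_eq_iff)
  ultimately show ?thesis by (simp add: b_def)
qed

lemma pencil_mult_adjp:
  "(\<Sum>l\<in>UNIV. pencil X $ i $ l * adjp X $ l $ j) = (if i = j then detpoly X else 0)"
proof (rule poly_eqI_cofinite[OF finite_det_id_plus_scaleR_eq_0[of X]])
  fix t assume "t \<notin> {t. det (mat 1 + t *\<^sub>R X) = 0}"
  thus "poly (\<Sum>l\<in>UNIV. pencil X $ i $ l * adjp X $ l $ j) t = poly (if i = j then detpoly X else 0) t"
    using cramer_cofactor_sum[of "mat 1 + t *\<^sub>R X" i j]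
    by (simp add: poly_sum poly_pencil poly_adjp poly_detpoly)
qed

lemma pCons_0_sum: "pCons 0 (sum f S) = (\<Sum>l\<in>S. pCons 0 (f l :: real poly))"
  by (induction S rule: infinite_finite_induct) (auto, metis add_pCons add_0)

text \<open>Comparing coefficients in \<open>(I + tX) R(t) = t\<^sup>n C\<close> from the bottom up kills all coefficients
  of \<open>R\<close>, and then the top one gives \<open>C = X R\<^sub>n\<^sub>-\<^sub>1 = 0\<close>.\<close>

lemma pencil_mult_eq_monom_imp_zero:
  fixes R :: "'n::finite \<Rightarrow> 'n \<Rightarrow> real poly" and X C :: "real^'n^'n"
  assumes deg: "\<And>i j. degree (R i j) < n"
    and eq: "\<And>i j. (\<Sum>l\<in>UNIV. pencil X $ i $ l * R l j) = monom (C $ i $ j) n"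
  shows "C = 0"
proof -
  have coeff_eq: "coeff (monom (C $ i $ j) n) k = coeff (R i j) k
      + (if k = 0 then 0 else (\<Sum>l\<in>UNIV. X$i$l * coeff (R l j) (k - 1)))" for i j k
  proof -
    have "pencil X $ i $ l * R l j = (if i = l then R l j else 0) + pCons 0 (smult (X$i$l) (R l j))" for l
      by (simp add: pencil_def mult_pCons_left)
    hence "(\<Sum>l\<in>UNIV. pencil X $ i $ l * R l j) = R i j + pCons 0 (\<Sum>l\<in>UNIV. smult (X$i$l) (R l j))"
      by (simp add: sum.distrib sum.delta pCons_0_sum)
    thus ?thesis unfolding eq[symmetric] by (cases k) (simp_all add: coeff_sum)
  qed
  have n: "0 < n" using deg[of undefined undefined] by simp
  have low: "\<forall>i j. coeff (R i j) k = 0" if "k < n" for k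
    using that
  proof (induction k)
    case 0 thus ?case using coeff_eq[of _ _ 0] n by (simp add: coeff_monom)
  next
    case (Suc k) thus ?case using coeff_eq[of _ _ "Suc k"] by (simp add: coeff_monom)
  qed
  have "C $ i $ j = 0" for i j
  proof -
    have "coeff (R i j) n = 0" by (simp add: coeff_eq_0 deg)
    thus ?thesis using coeff_eq[of i j n] low[of "n - 1"] n by simp
  qed
  thus ?thesis by (simp add: vec_eq_iff)
qed

theorem Ymat_card_eq_0: "Ymat (int CARD('n)) (X::real^'n^('n::finite)) = 0"
proof -
  let ?n = "CARD('n)"
  define R where "R i j = adjp X $ i $ j - (\<Sum>l<?n. monom (Ymat (int l) X $ i $ j) l)" for i j
  have "degree (R i j) < ?n" for i j
  proof -
    have "degree (R i j) \<le> ?n - 1"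
      unfolding R_def
    proof (rule order.trans[OF degree_diff_le_max], rule max.boundedI)
      show "degree (\<Sum>l<?n. monom (Ymat (int l) X $ i $ j) l) \<le> ?n - 1"
        by (rule degree_sum_le) (auto intro: order.trans[OF degree_monom_le])
    qed (rule degree_adjp)
    moreover have "0 < ?n" by simp
    ultimately show ?thesis by linarith
  qed
  moreover have "(\<Sum>l\<in>UNIV. pencil X $ i $ l * R l j) = monom (Ymat (int ?n) X $ i $ j) ?n"
    for i j
  proof (rule poly_ext)
    fix t
    let ?A = "mat 1 + t *\<^sub>R X"
    have "poly (\<Sum>l\<in>UNIV. pencil X $ i $ l * R l j) t
        = (\<Sum>l\<in>UNIV. ?A$i$l * poly (adjp X $ l $ j) t)
          - (?A ** (\<Sum>m<?n. t ^ m *\<^sub>R Ymat (int m) X)) $ i $ j"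
      unfolding R_def
      by (simp add: poly_sum poly_monom poly_pencil matrix_matrix_mult_def sum_subtractf
          algebra_simps sum_distrib_left sum_component)
    also have "(\<Sum>l\<in>UNIV. ?A$i$l * poly (adjp X $ l $ j) t) = (if i = j then det ?A else 0)"
      using arg_cong[where f="\<lambda>p. poly p t", OF pencil_mult_adjp[of X i j]]
      by (simp add: poly_sum poly_pencil poly_detpoly)
    also have "(?A ** (\<Sum>m<?n. t ^ m *\<^sub>R Ymat (int m) X)) $ i $ j
        = (det ?A *\<^sub>R mat 1 - t ^ ?n *\<^sub>R Ymat (int ?n) X) $ i $ j"
      by (simp only: id_plus_scaleR_mult_Ymat_sum)
    finally show "poly (\<Sum>l\<in>UNIV. pencil X $ i $ l * R l j) t
        = poly (monom (Ymat (int ?n) X $ i $ j) ?n) t"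
      by (simp add: poly_monom mat_def)
  qed
  ultimately show ?thesis by (rule pencil_mult_eq_monom_imp_zero[of R ?n X "Ymat (int ?n) X"])
qed

section \<open>Bordered matrices\<close>

text \<open>Matrices indexed by \<open>'s option\<close>, with \<open>None\<close> the time index, in block form
  \<open>[[a, r\<^sup>T], [c, A]]\<close>.\<close>

definition bordered :: "real \<Rightarrow> real^'s \<Rightarrow> real^'s \<Rightarrow> real^'s^'s \<Rightarrow> real^('s::finite option)^('s option)"
  where "bordered a r c A = (\<chi> p q. case p of
      None \<Rightarrow> (case q of None \<Rightarrow> a | Some j \<Rightarrow> r$j)
    | Some i \<Rightarrow> (case q of None \<Rightarrow> c$i | Some j \<Rightarrow> A$i$j))"

definition bvec :: "real \<Rightarrow> real^'s \<Rightarrow> real^('s::finite option)" where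
  "bvec x0 x = (\<chi> p. case p of None \<Rightarrow> x0 | Some i \<Rightarrow> x$i)"

lemma bordered_nth [simp]:
  "bordered a r c A $ None $ None = a" "bordered a r c A $ None $ Some j = r$j"
  "bordered a r c A $ Some i $ None = c$i" "bordered a r c A $ Some i $ Some j = A$i$j"
  by (simp_all add: bordered_def)

lemma bvec_nth [simp]: "bvec x0 x $ None = x0" "bvec x0 x $ Some i = x$i"
  by (simp_all add: bvec_def)

lemma UNIV_option_eq: "(UNIV :: 'a option set) = insert None (Some ` UNIV)"
  by (auto, metis not_Some_eq rangeI)

lemma sum_UNIV_option: "(\<Sum>q\<in>(UNIV::'a::finite option set). f q) = f None + (\<Sum>i\<in>UNIV. f (Some i))"
  unfolding UNIV_option_eq by (simp add: sum.reindex)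

lemma prod_UNIV_option: "(\<Prod>q\<in>(UNIV::'a::finite option set). f q) = f None * (\<Prod>i\<in>UNIV. f (Some i))"
  unfolding UNIV_option_eq by (simp add: prod.reindex)

lemma bordered_eq_iff:
  "bordered a r c A = bordered a' r' c' A' \<longleftrightarrow> a = a' \<and> r = r' \<and> c = c' \<and> A = A'"
proof
  assume "bordered a r c A = bordered a' r' c' A'"
  hence "bordered a r c A $ p $ q = bordered a' r' c' A' $ p $ q" for p q by simp
  thus "a = a' \<and> r = r' \<and> c = c' \<and> A = A'"
    by (simp add: vec_eq_iff) (metis bordered_nth)
qed simp

lemma bordered_cases: obtains a r c A where "(M::real^('s::finite option)^('s option)) = bordered a r c A"
proof
  show "M = bordered (M$None$None) (\<chi> j. M$None$Some j) (\<chi> i. M$Some i$None) (\<chi> i j. M$Some i$Some j)"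
    by (simp add: vec_eq_iff bordered_def split: option.split)
qed

lemma bordered_mult: "bordered a r c A ** bordered a' r' c' A' =
   bordered (a * a' + r \<bullet> c') (a *\<^sub>R r' + transpose A' *v r) (a' *\<^sub>R c + A *v c') (outer c r' + A ** A')"
  by (simp add: vec_eq_iff bordered_def matrix_matrix_mult_def sum_UNIV_option inner_vec_def outer_def
      matrix_vector_mult_def transpose_def split: option.split) (simp add: algebra_simps)

lemma bordered_add:
  "bordered a r c A + bordered a' r' c' A' = bordered (a + a') (r + r') (c + c') (A + A')"
  by (simp add: vec_eq_iff bordered_def split: option.split)

lemma bordered_diff:
  "bordered a r c A - bordered a' r' c' A' = bordered (a - a') (r - r') (c - c') (A - A')"
  by (simp add: vec_eq_iff bordered_def split: option.split)

lemma bordered_scaleR: "x *\<^sub>R bordered a r c A = bordered (x * a) (x *\<^sub>R r) (x *\<^sub>R c) (x *\<^sub>R A)"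
  by (simp add: vec_eq_iff bordered_def split: option.split)

lemma mat_bordered: "(mat x :: real^('s::finite option)^('s option)) = bordered x 0 0 (mat x)"
  by (simp add: vec_eq_iff bordered_def mat_def split: option.split)

lemma scaleR_mat_1_bordered:
  "c *\<^sub>R (mat 1 :: real^('s::finite option)^('s option)) = bordered c 0 0 (c *\<^sub>R mat 1)"
  by (simp add: mat_bordered bordered_scaleR)

lemma zero_bordered: "(0 :: real^('s::finite option)^('s option)) = bordered 0 0 0 0"
  by (simp add: vec_eq_iff bordered_def split: option.split)

lemma transpose_bordered: "transpose (bordered a r c A) = bordered a c r (transpose A)"
  by (simp add: vec_eq_iff bordered_def transpose_def split: option.split)

lemma bordered_mult_bvec:
  "bordered a r c A *v bvec x0 x = bvec (a * x0 + r \<bullet> x) (x0 *\<^sub>R c + A *v x)"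
  by (simp add: vec_eq_iff bvec_def matrix_vector_mult_def sum_UNIV_option inner_vec_def
      split: option.split)

lemma inner_bvec: "bvec a x \<bullet> bvec b y = a * b + x \<bullet> y"
  by (simp add: inner_vec_def sum_UNIV_option)

lemma bvec_scaleR [simp]: "c *\<^sub>R bvec x0 x = bvec (c * x0) (c *\<^sub>R x)"
  by (simp add: bvec_def vec_eq_iff split: option.split)

lemma bvec_neg [simp]: "- bvec x0 x = bvec (- x0) (- x)"
  by (simp add: bvec_def vec_eq_iff split: option.split)

lemma outer_bvec:
  "outer (bvec x0 x) (bvec y0 y) = bordered (x0 * y0) (x0 *\<^sub>R y) (y0 *\<^sub>R x) (outer x (y::real^'s::finite))"
  by (simp add: outer_def bordered_def vec_eq_iff split: option.split)

lemma inner_bvec_mult_bvec: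
  "bvec 1 0 \<bullet> ((M::real^('s::finite option)^('s option)) *v bvec x0 0) = x0 * M $ None $ None"
proof -
  obtain a r c A where "M = bordered a r c A" by (rule bordered_cases)
  thus ?thesis by (simp add: bordered_mult_bvec inner_bvec)
qed

definition option_perm :: "('s \<Rightarrow> 's) \<Rightarrow> 's option \<Rightarrow> 's option" where
  "option_perm \<sigma> x = (case x of None \<Rightarrow> None | Some i \<Rightarrow> Some (\<sigma> i))"

lemma option_perm_eq_map_permutation: "option_perm \<sigma> = map_permutation UNIV Some \<sigma>"
  by (auto simp: fun_eq_iff option_perm_def map_permutation_def restrict_id_def split: option.split)

lemma sign_option_perm: "\<sigma> permutes (UNIV::'s::finite set) \<Longrightarrow> sign (option_perm \<sigma>) = sign \<sigma>"
  unfolding option_perm_eq_map_permutation by (rule sign_map_permutation) auto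

lemma option_perm_permutes: "\<sigma> permutes (UNIV::'s::finite set) \<Longrightarrow> option_perm \<sigma> permutes UNIV"
proof -
  assume "\<sigma> permutes UNIV"
  hence "map_permutation UNIV Some \<sigma> permutes range Some"
    by (intro map_permutation_permutes) (auto simp: bij_betw_def)
  thus ?thesis unfolding option_perm_eq_map_permutation by (rule permutes_subset) simp
qed

lemma permutes_fixing_None:
  fixes p :: "'s::finite option \<Rightarrow> 's option"
  assumes p: "p permutes UNIV" and pN: "p None = None"
  shows "(\<lambda>i. the (p (Some i))) permutes UNIV" and "option_perm (\<lambda>i. the (p (Some i))) = p"
proof -
  have pS: "p (Some i) \<noteq> None" for i
    using permutes_inj[OF p] pN by (metis inj_eq option.distinct(1))
  show "option_perm (\<lambda>i. the (p (Some i))) = p"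
    using pN pS by (auto simp: fun_eq_iff option_perm_def split: option.split)
  have "inj (\<lambda>i. the (p (Some i)))"
  proof (rule injI)
    fix x y assume "the (p (Some x)) = the (p (Some y))"
    hence "p (Some x) = p (Some y)" using pS[of x] pS[of y] by (auto simp: option.expand)
    thus "x = y" using permutes_inj[OF p] by (simp add: inj_eq)
  qed
  hence "bij (\<lambda>i. the (p (Some i)))" by (simp add: finite_UNIV_inj_surj bij_def)
  thus "(\<lambda>i. the (p (Some i))) permutes UNIV" using bij_imp_permutes by blast
qed

lemma bij_betw_option_perm:
  "bij_betw option_perm {\<sigma>. \<sigma> permutes (UNIV::'s::finite set)}
     {p. p permutes (UNIV::'s option set) \<and> p None = None}"
  by (rule bij_betw_byWitness[where f'="\<lambda>p i. the (p (Some i))"])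
    (auto simp: option_perm_permutes permutes_fixing_None, auto simp: option_perm_def)

lemma det_bordered_lower: "det (bordered a 0 c A) = a * det (A::real^'s^('s::finite))"
proof -
  let ?M = "bordered a 0 c A"
  let ?t = "\<lambda>p. of_int (sign p) * (\<Prod>q\<in>UNIV. ?M $ q $ p q)"
  let ?T = "{p. p permutes (UNIV::'s option set) \<and> p None = None}"
  have "det ?M = sum ?t ?T"
    unfolding det_def
  proof (rule sum.mono_neutral_right)
    show "\<forall>p\<in>{p. p permutes UNIV} - ?T. ?t p = 0"
    proof
      fix p assume "p \<in> {p. p permutes UNIV} - ?T"
      then obtain j where "p None = Some j" by auto
      hence "?M $ None $ p None = 0" by simp
      hence "(\<Prod>q\<in>UNIV. ?M $ q $ p q) = 0" by (metis UNIV_I finite prod_zero)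
      thus "?t p = 0" by simp
    qed
  qed (auto simp: finite_permutations)
  also have "\<dots> = sum (?t \<circ> option_perm) {\<sigma>. \<sigma> permutes (UNIV::'s set)}"
    using sum.reindex_bij_betw[OF bij_betw_option_perm, of ?t] by simp
  also have "\<dots> = (\<Sum>\<sigma>\<in>{\<sigma>. \<sigma> permutes (UNIV::'s set)}. a * (of_int (sign \<sigma>) * (\<Prod>i\<in>UNIV. A $ i $ \<sigma> i)))"
    by (rule sum.cong) (auto simp: sign_option_perm prod_UNIV_option option_perm_def)
  also have "\<dots> = a * det A" by (simp add: det_def sum_distrib_left)
  finally show ?thesis .
qed

lemma det_bordered_upper: "det (bordered a r 0 A) = a * det (A::real^'s^('s::finite))"
  using det_bordered_lower[of a r "transpose A"] det_transpose[of "bordered a r 0 A"]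
  by (simp add: transpose_bordered)

lemma det_id_minus_outer: "det (mat 1 - outer x y) = 1 - y \<bullet> (x::real^'s::finite)"
proof -
  have "bordered 1 y x (mat 1) = bordered 1 y 0 (mat 1) ** bordered (1 - y \<bullet> x) 0 x (mat 1)"
    by (simp add: bordered_mult inner_commute)
  hence "det (bordered 1 y x (mat 1)) = 1 - y \<bullet> x"
    by (simp add: det_mul det_bordered_upper det_bordered_lower)
  moreover have "bordered 1 y x (mat 1) = bordered 1 0 x (mat 1 - outer x y) ** bordered 1 y 0 (mat 1)"
    by (simp add: bordered_mult)
  hence "det (bordered 1 y x (mat 1)) = det (mat 1 - outer x y)"
    by (simp add: det_mul det_bordered_upper det_bordered_lower)
  ultimately show ?thesis by simp
qed

lemma det_minus_outer:
  fixes A :: "real^'n^('n::finite)"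
  assumes "invertible A"
  shows "det (A - outer u w) = det A * (1 - w \<bullet> (matrix_inv A *v u))"
proof -
  have "A - outer u w = A ** (mat 1 - outer (matrix_inv A *v u) w)"
    by (simp add: matrix_mul_algebra matrix_mul_outer matrix_vector_mul_assoc matrix_inv_right[OF assms])
  thus ?thesis by (simp add: det_mul det_id_minus_outer)
qed

lemma Ymat_eq_0_above: "int CARD('n) \<le> k \<Longrightarrow> Ymat k (X::real^'n^('n::finite)) = 0"
proof (induction k rule: int_ge_induct)
  case base thus ?case by (rule Ymat_card_eq_0)
next
  case (step i)
  thus ?case using Ymat_rec[of "i + 1" X] by (simp add: esym_eq_0_above)
qed

lemma matrix_inv_id_plus_scaleR:
  fixes X :: "real^'n^('n::finite)"
  assumes "det (mat 1 + t *\<^sub>R X) \<noteq> 0"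
  shows "matrix_inv (mat 1 + t *\<^sub>R X)
    = (1 / det (mat 1 + t *\<^sub>R X)) *\<^sub>R (\<Sum>j<CARD('n). t ^ j *\<^sub>R Ymat (int j) X)"
  using assms id_plus_scaleR_mult_Ymat_sum[of t X]
  by (intro matrix_inv_unique) (simp add: Ymat_card_eq_0 matrix_mul_scaleR)

lemma esym_similar:
  fixes T X :: "real^'n^('n::finite)"
  assumes "invertible T"
  shows "esym k (T ** X ** matrix_inv T) = esym k X"
proof (rule esym_eqI)
  fix t
  have "T ** (mat 1 + t *\<^sub>R X) ** matrix_inv T = T ** matrix_inv T + t *\<^sub>R (T ** X ** matrix_inv T)"
    by (simp only: matrix_add_ldistrib matrix_add_rdistrib matrix_mul_scaleR matrix_scaleR_mul
        matrix_mul_rid)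
  hence "mat 1 + t *\<^sub>R (T ** X ** matrix_inv T) = T ** (mat 1 + t *\<^sub>R X) ** matrix_inv T"
    using matrix_inv_right[OF assms] by simp
  thus "det (mat 1 + t *\<^sub>R (T ** X ** matrix_inv T)) = det (mat 1 + t *\<^sub>R X)"
    using det_matrix_inv[OF assms] invertible_det_nz[of T] assms by (simp add: det_mul)
qed

lemma mpow_similar:
  fixes T X :: "real^'n^('n::finite)"
  assumes "invertible T"
  shows "mpow (T ** X ** matrix_inv T) n = T ** mpow X n ** matrix_inv T"
proof (induction n)
  case 0 thus ?case using matrix_inv_right[OF assms] by simp
next
  case (Suc n)
  have "T ** X ** matrix_inv T ** (T ** mpow X n ** matrix_inv T)
      = T ** X ** (matrix_inv T ** T) ** mpow X n ** matrix_inv T"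
    by (simp add: matrix_mul_assoc)
  thus ?case using Suc matrix_inv_left[OF assms] by (simp add: matrix_mul_assoc)
qed

lemma Ymat_similar:
  fixes T X :: "real^'n^('n::finite)"
  assumes "invertible T"
  shows "Ymat k (T ** X ** matrix_inv T) = T ** Ymat k X ** matrix_inv T"
  unfolding Ymat_def matrix_mul_sum matrix_sum_mul esym_similar[OF assms] mpow_similar[OF assms]
  by (simp add: matrix_mul_algebra)

lemma esym_transpose: "esym k (transpose X) = esym k (X::real^'n^('n::finite))"
proof (rule esym_eqI)
  fix t
  have "mat 1 + t *\<^sub>R transpose X = transpose (mat 1 + t *\<^sub>R X)"
    by (simp add: transpose_def vec_eq_iff mat_def)
  thus "det (mat 1 + t *\<^sub>R transpose X) = det (mat 1 + t *\<^sub>R X)" by simp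
qed

lemma mpow_transpose: "mpow (transpose X) n = transpose (mpow (X::real^'n^('n::finite)) n)"
  by (induction n) (simp_all add: matrix_transpose_mul mpow_commute)

lemma Ymat_transpose: "Ymat k (transpose X) = transpose (Ymat k (X::real^'n^('n::finite)))"
  unfolding Ymat_def transpose_sum by (simp add: esym_transpose mpow_transpose transpose_scalar)

lemma detpoly_minus_outer:
  fixes X :: "real^'n^('n::finite)"
  shows "detpoly (X - outer x y)
    = detpoly X - (\<Sum>j<CARD('n). monom (y \<bullet> (Ymat (int j) X *v x)) (Suc j))"
proof (rule poly_eqI_cofinite[OF finite_det_id_plus_scaleR_eq_0[of X]])
  fix t assume "t \<notin> {t. det (mat 1 + t *\<^sub>R X) = 0}"
  hence t: "det (mat 1 + t *\<^sub>R X) \<noteq> 0" by simp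
  let ?A = "mat 1 + t *\<^sub>R X"
  let ?Q = "\<Sum>j<CARD('n). t ^ j *\<^sub>R Ymat (int j) X"
  have "mat 1 + t *\<^sub>R (X - outer x y) = ?A - outer (t *\<^sub>R x) y"
    by (simp add: algebra_simps outer_scaleR)
  hence "poly (detpoly (X - outer x y)) t = det (?A - outer (t *\<^sub>R x) y)"
    by (simp only: poly_detpoly)
  also have "\<dots> = det ?A * (1 - y \<bullet> (matrix_inv ?A *v (t *\<^sub>R x)))"
    using t invertible_det_nz by (blast intro: det_minus_outer)
  also have "\<dots> = det ?A - t * (y \<bullet> (?Q *v x))"
    using t by (simp add: matrix_inv_id_plus_scaleR scaleR_matrix_vector_mult
        matrix_vector_mult_scaleR algebra_simps)
  also have "\<dots> = poly (detpoly X - (\<Sum>j<CARD('n). monom (y \<bullet> (Ymat (int j) X *v x)) (Suc j))) t"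
    by (simp add: poly_detpoly poly_sum poly_monom sum_distrib_left matrix_vector_mult_sum
        scaleR_matrix_vector_mult inner_sum_right algebra_simps)
  finally show "poly (detpoly (X - outer x y)) t
      = poly (detpoly X - (\<Sum>j<CARD('n). monom (y \<bullet> (Ymat (int j) X *v x)) (Suc j))) t" .
qed

theorem esym_minus_outer:
  fixes X :: "real^'n^('n::finite)"
  shows "esym k (X - outer x y) = esym k X - y \<bullet> (Ymat (k - 1) X *v x)"
proof (cases "k \<le> 0")
  case True thus ?thesis
    by (cases "k = 0") (simp_all add: Ymat_neg esym_def detpoly_minus_outer coeff_sum coeff_monom)
next
  case False
  define j where "j = nat (k - 1)"
  have j: "nat k = Suc j" "k - 1 = int j" using False by (simp_all add: j_def nat_diff_distrib')
  have "coeff (\<Sum>i<CARD('n). monom (y \<bullet> (Ymat (int i) X *v x)) (Suc i)) (Suc j)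
      = (\<Sum>i<CARD('n). if i = j then y \<bullet> (Ymat (int i) X *v x) else 0)"
    by (simp add: coeff_sum coeff_monom)
  also have "\<dots> = y \<bullet> (Ymat (int j) X *v x)"
    by (cases "j < CARD('n)") (simp_all add: Ymat_eq_0_above)
  finally show ?thesis using False by (simp add: j esym_def detpoly_minus_outer)
qed

theorem Ymat_minus_outer_mult:
  fixes X :: "real^'n^('n::finite)"
  shows "Ymat k (X - outer x y) *v x = Ymat k X *v x"
proof (cases "k < 0")
  case True thus ?thesis by (simp add: Ymat_neg)
next
  case False
  hence "0 \<le> k" by simp
  thus ?thesis
  proof (induction k rule: int_ge_induct)
    case base thus ?case by (simp add: Ymat_0)
  next
    case (step i)
    let ?X' = "X - outer x y"
    have "Ymat (i + 1) ?X' *v x = esym (i + 1) ?X' *\<^sub>R x - ?X' *v (Ymat i ?X' *v x)"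
      by (simp add: Ymat_rec[of "i + 1"] matrix_vector_mult_diff_rdistrib scaleR_matrix_vector_mult
          matrix_vector_mul_assoc)
    also have "\<dots> = esym (i + 1) X *\<^sub>R x - X *v (Ymat i X *v x)"
      by (simp add: step.IH esym_minus_outer matrix_vector_mult_diff_rdistrib outer_matrix_vector_mult
          algebra_simps)
    also have "\<dots> = Ymat (i + 1) X *v x"
      by (simp add: Ymat_rec[of "i + 1" X] matrix_vector_mult_diff_rdistrib scaleR_matrix_vector_mult
          matrix_vector_mul_assoc)
    finally show ?case .
  qed
qed

lemma detpoly_matrix_inv:
  fixes X :: "real^'n^('n::finite)"
  assumes X: "invertible X"
  shows "detpoly (matrix_inv X)
    = smult (1 / det X) (\<Sum>j\<le>CARD('n). monom (esym (int j) X) (CARD('n) - j))"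
proof (rule poly_eqI_cofinite[of "{0}"])
  fix t :: real assume "t \<notin> {0}"
  hence t: "t \<noteq> 0" by simp
  let ?n = "CARD('n)"
  have "matrix_inv X ** (t *\<^sub>R (mat 1 + (1/t) *\<^sub>R X))
      = t *\<^sub>R matrix_inv X + (t * (1/t)) *\<^sub>R (matrix_inv X ** X)"
    by (simp only: matrix_mul_scaleR matrix_add_ldistrib matrix_mul_rid scaleR_add_right scaleR_scaleR)
  hence "mat 1 + t *\<^sub>R matrix_inv X = matrix_inv X ** (t *\<^sub>R (mat 1 + (1/t) *\<^sub>R X))"
    using t by (simp add: matrix_inv_left[OF X])
  hence "poly (detpoly (matrix_inv X)) t = (1 / det X) * (t ^ ?n * det (mat 1 + (1/t) *\<^sub>R X))"
    by (simp add: poly_detpoly det_mul det_matrix_inv[OF X] det_scaleR)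
  also have "t ^ ?n * det (mat 1 + (1/t) *\<^sub>R X) = (\<Sum>j\<le>?n. esym (int j) X * t ^ (?n - j))"
    unfolding det_id_plus_scaleR_esym sum_distrib_left
  proof (rule sum.cong)
    fix j assume "j \<in> {..?n}"
    hence "t ^ ?n = t ^ (?n - j) * t ^ j" by (simp add: power_add[symmetric])
    thus "t ^ ?n * (esym (int j) X * (1 / t) ^ j) = esym (int j) X * t ^ (?n - j)"
      using t by (simp add: power_one_over field_simps)
  qed simp
  finally show "poly (detpoly (matrix_inv X)) t
      = poly (smult (1 / det X) (\<Sum>j\<le>?n. monom (esym (int j) X) (?n - j))) t"
    by (simp add: poly_sum poly_monom)
qed simp

theorem esym_matrix_inv:
  fixes X :: "real^'n^('n::finite)"
  assumes X: "invertible X"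
  shows "esym k (matrix_inv X) = esym (int CARD('n) - k) X / det X"
proof -
  let ?n = "CARD('n)"
  let ?s = "\<Sum>j\<le>?n. if ?n - j = nat k then esym (int j) X else 0"
  have c: "coeff (detpoly (matrix_inv X)) (nat k) = ?s / det X"
    by (simp add: detpoly_matrix_inv[OF X] coeff_sum coeff_monom)
  consider "k < 0" | "0 \<le> k" "k \<le> int ?n" | "int ?n < k" by linarith
  thus ?thesis
  proof cases
    case 1 thus ?thesis by (simp add: esym_eq_0_above)
  next
    case 2
    have "?s = (\<Sum>j\<in>{?n - nat k}. esym (int j) X)"
      by (rule sum.mono_neutral_cong_right) (use 2 in auto)
    also have "\<dots> = esym (int ?n - k) X" using 2 by (simp add: of_nat_diff)
    finally show ?thesis using 2 c by (simp add: esym_def[of k])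
  next
    case 3
    have "?s = 0" by (rule sum.neutral) (use 3 in auto)
    thus ?thesis using 3 c by (simp add: esym_def[of k])
  qed
qed

theorem Ymat_matrix_inv:
  fixes X :: "real^'n^('n::finite)"
  assumes X: "invertible X"
  shows "Ymat (int CARD('n) - k) (matrix_inv X) = (1 / det X) *\<^sub>R (X ** Ymat (k - 1) X)"
proof (cases "k \<le> int CARD('n) + 1")
  case True
  thus ?thesis
  proof (induction k rule: int_le_induct)
    case base thus ?case by (simp add: Ymat_neg Ymat_card_eq_0)
  next
    case (step i)
    have "matrix_inv X ** ((1 / det X) *\<^sub>R (X ** Ymat (i - 1) X)) = (1 / det X) *\<^sub>R Ymat (i - 1) X"
      by (simp add: matrix_mul_scaleR matrix_mul_assoc matrix_inv_left[OF X])
    hence "Ymat (int CARD('n) - (i - 1)) (matrix_inv X)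
        = (esym (i - 1) X / det X) *\<^sub>R mat 1 - (1 / det X) *\<^sub>R Ymat (i - 1) X"
      using Ymat_rec[of "int CARD('n) - (i - 1)" "matrix_inv X"] step.IH
      by (simp add: esym_matrix_inv[OF X] algebra_simps)
    also have "\<dots> = (1 / det X) *\<^sub>R (X ** Ymat (i - 1 - 1) X)"
      by (simp add: Ymat_rec[of "i - 1" X] scaleR_diff_right divide_inverse)
    finally show ?case .
  qed
next
  case False
  thus ?thesis by (simp add: Ymat_neg Ymat_eq_0_above)
qed

section \<open>The block matrix \<open>S\<close> in an adapted frame\<close>

lemma esym_bordered_lower: "esym k (bordered 0 0 c A) = esym k (A::real^'s^('s::finite))"
proof (rule esym_eqI)
  fix t
  have "mat 1 + t *\<^sub>R bordered 0 0 c A = bordered 1 0 (t *\<^sub>R c) (mat 1 + t *\<^sub>R A)"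
    by (simp add: mat_bordered bordered_scaleR bordered_add)
  thus "det (mat 1 + t *\<^sub>R bordered 0 0 c A) = det (mat 1 + t *\<^sub>R A)"
    by (simp add: det_bordered_lower)
qed

lemma Ymat_bordered_lower:
  "Ymat k (bordered 0 0 c A)
    = bordered (esym k A) 0 (- (Ymat (k - 1) A *v c)) (Ymat k (A::real^'s^('s::finite)))"
proof (cases "k < 0")
  case True thus ?thesis by (simp add: Ymat_neg zero_bordered)
next
  case False
  hence "0 \<le> k" by simp
  thus ?thesis
  proof (induction k rule: int_ge_induct)
    case base thus ?case by (simp add: Ymat_0 Ymat_neg mat_bordered)
  next
    case (step i)
    let ?L = "bordered 0 0 c A"
    have rec_L: "Ymat (i + 1) ?L = esym (i + 1) ?L *\<^sub>R mat 1 - ?L ** Ymat i ?L"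
      using Ymat_rec[of "i + 1" ?L] by simp
    have rec_A: "Ymat (i + 1) A = esym (i + 1) A *\<^sub>R mat 1 - A ** Ymat i A"
      using Ymat_rec[of "i + 1" A] by simp
    have "esym i A *\<^sub>R c - A *v (Ymat (i - 1) A *v c) = Ymat i A *v c"
      by (simp add: Ymat_rec[of i A] matrix_vector_mult_diff_rdistrib scaleR_matrix_vector_mult
          matrix_vector_mul_assoc)
    thus ?case
      unfolding rec_L rec_A step.IH esym_bordered_lower scaleR_mat_1_bordered bordered_mult
        bordered_diff
      by (simp add: algebra_simps matrix_vector_mult_neg)
  qed
qed

text \<open>In the orthonormal frame of \<open>g\<close>, \<open>S = g\<^sup>-\<^sup>1h\<close> takes the form \<open>Sblock a v P\<close> with
  \<open>P\<close> symmetric; in the frame of \<open>f\<close>, \<open>S\<^sup>-\<^sup>1\<close> has the same form with \<open>v\<close> replaced by \<open>-v\<close>.\<close>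

definition Sblock :: "real \<Rightarrow> real^'s \<Rightarrow> real^'s^'s \<Rightarrow> real^('s::finite option)^('s option)" where
  "Sblock a v P = bordered (a - v \<bullet> (P *v v)) (P *v v) (- (P *v v)) P"

lemma matrix_inv_bordered_shear:
  "matrix_inv (bordered 1 v 0 (mat 1)) = bordered 1 (- v) 0 (mat 1)"
  and invertible_bordered_shear: "invertible (bordered 1 v 0 (mat 1))"
proof -
  have "bordered 1 v 0 (mat 1) ** bordered 1 (- v) 0 (mat 1) = mat 1"
    by (simp add: bordered_mult mat_bordered)
  thus "matrix_inv (bordered 1 v 0 (mat 1)) = bordered 1 (- v) 0 (mat 1)"
    and "invertible (bordered 1 v 0 (mat 1))"
    by (simp_all add: matrix_inv_unique invertibleI)
qed

lemma Sblock_0_similar: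
  fixes P :: "real^'s^('s::finite)"
  assumes P: "transpose P = P"
  shows "Sblock 0 v P = bordered 1 v 0 (mat 1) ** bordered 0 0 (- (P *v v)) (P - outer (P *v v) v)
      ** matrix_inv (bordered 1 v 0 (mat 1))"
proof -
  have "v v* (P - outer (P *v v) v) = P *v v - (v \<bullet> (P *v v)) *\<^sub>R v"
    using transpose_matrix_vector[of "P - outer (P *v v) v" v]
    by (simp add: transpose_diff P transpose_outer outer_matrix_vector_mult
        matrix_vector_mult_diff_rdistrib inner_commute)
  moreover have "outer (- (P *v v)) (- v) + (P - outer (P *v v) v) = P" by (simp add: outer_neg)
  ultimately show ?thesis
    unfolding matrix_inv_bordered_shear Sblock_def bordered_mult by simp
qed

lemma esym_Sblock:
  fixes P :: "real^'s^('s::finite)"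
  assumes P: "transpose P = P"
  shows "esym k (Sblock a v P) = esym k (P - outer v (P *v v)) + a * esym (k - 1) P"
proof -
  define w where "w = P *v v"
  define Z :: "real^('s option)^('s option)" where "Z = bordered 1 v 0 (mat 1)"
  define M where "M = bordered 0 0 (- w) (P - outer w v)"
  have similar: "Sblock 0 v P = Z ** M ** matrix_inv Z"
    unfolding Z_def M_def w_def by (rule Sblock_0_similar[OF P])
  have Z: "invertible Z" unfolding Z_def by (rule invertible_bordered_shear)
  have corner: "Ymat (k - 1) (Sblock 0 v P) $ None $ None = esym (k - 1) P"
  proof -
    have "Ymat (k - 1) (Sblock 0 v P)
        = Z ** bordered (esym (k - 1) (P - outer w v)) 0 (Ymat (k - 1 - 1) (P - outer w v) *v w)
            (Ymat (k - 1) (P - outer w v)) ** bordered 1 (- v) 0 (mat 1)"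
      unfolding similar Ymat_similar[OF Z] M_def Ymat_bordered_lower
      by (simp add: Z_def matrix_inv_bordered_shear matrix_vector_mult_neg)
    thus ?thesis
      by (simp add: Z_def bordered_mult esym_minus_outer Ymat_minus_outer_mult)
  qed
  have "esym k (Sblock 0 v P) = esym k P - v \<bullet> (Ymat (k - 1) P *v w)"
    unfolding similar esym_similar[OF Z] M_def esym_bordered_lower esym_minus_outer ..
  also have "v \<bullet> (Ymat (k - 1) P *v w) = w \<bullet> (Ymat (k - 1) P *v v)"
    unfolding w_def inner_matrix_vector_mult P matrix_vector_mul_assoc Ymat_commute
    by (simp add: inner_commute)
  finally have "esym k (Sblock 0 v P) = esym k (P - outer v w)"
    by (simp add: esym_minus_outer)
  moreover have "Sblock a v P = Sblock 0 v P - outer ((- a) *\<^sub>R bvec 1 0) (bvec 1 0)"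
    by (simp add: Sblock_def outer_bvec bordered_diff)
  ultimately show ?thesis
    using corner by (simp add: esym_minus_outer inner_bvec_mult_bvec w_def)
qed

lemma transpose_Ymat_minus_outer_mult:
  fixes P :: "real^'s^('s::finite)"
  assumes P: "transpose P = P"
  shows "transpose (Ymat k (P - outer v (P *v v))) *v (P *v v) = Ymat k P *v (P *v v)"
proof -
  have "transpose (P - outer v (P *v v)) = P - outer (P *v v) v"
    by (simp add: transpose_diff P transpose_outer)
  thus ?thesis using Ymat_minus_outer_mult[of k P "P *v v" v] by (simp add: Ymat_transpose[symmetric])
qed

lemma Ymat_minus_outer_sym:
  fixes P :: "real^'s^('s::finite)" and v :: "real^'s"
  assumes P: "transpose P = P"
  defines "D \<equiv> P - outer v (P *v v)"
  shows "Ymat k D - outer v (Ymat (k - 1) P *v (P *v v)) = esym k D *\<^sub>R mat 1 - P ** Ymat (k - 1) D"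
proof -
  have "outer v (P *v v) ** Ymat (k - 1) D = outer v (Ymat (k - 1) P *v (P *v v))"
    using transpose_Ymat_minus_outer_mult[OF P, where k="k - 1" and v=v]
    by (simp add: outer_matrix_mul D_def del: transpose_matrix_vector)
  moreover have "P ** Ymat (k - 1) D = D ** Ymat (k - 1) D + outer v (P *v v) ** Ymat (k - 1) D"
    by (simp add: D_def matrix_mul_algebra)
  ultimately show ?thesis using Ymat_rec[of k D] by (simp add: algebra_simps)
qed

lemma Ymat_Sblock_step:
  fixes P :: "real^'s^('s::finite)" and v :: "real^'s" and a :: real
  assumes P: "transpose P = P"
  defines "w \<equiv> P *v v"
  defines "D \<equiv> P - outer v w"
  defines "R \<equiv> \<lambda>k. bordered (esym k P) (- (Ymat (k - 1) P *v w)) (P *v (Ymat (k - 1) P *v v))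
                (Ymat k D - outer v (Ymat (k - 1) P *v w) + a *\<^sub>R Ymat (k - 1) P)"
  shows "esym (k + 1) (Sblock a v P) *\<^sub>R mat 1 - Sblock a v P ** R k = R (k + 1)"
proof -
  let ?L = "Sblock a v P"
  let ?e = "esym k P" and ?Yp = "Ymat (k - 1) P" and ?Yd = "Ymat k D"
  have YP: "Ymat k P = ?e *\<^sub>R mat 1 - P ** ?Yp"
    using Ymat_rec[of k P] by simp
  have eL: "esym (k + 1) ?L = esym (k + 1) D + a * ?e"
    using esym_Sblock[OF P, of "k + 1" a v] by (simp add: D_def w_def)
  have YpT: "transpose ?Yp = ?Yp" using Ymat_transpose[of "k - 1" P] P by simp
  define S where "S = ?Yd - outer v (?Yp *v w) + a *\<^sub>R ?Yp"
  have corner: "esym (k + 1) ?L - ((a - v \<bullet> w) * ?e + w \<bullet> (P *v (?Yp *v v))) = esym (k + 1) P"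
  proof -
    have "w \<bullet> (Ymat k P *v v) = ?e * (w \<bullet> v) - w \<bullet> (P *v (?Yp *v v))"
      unfolding YP by (simp add: matrix_vector_mult_diff_rdistrib scaleR_matrix_vector_mult
          matrix_vector_mul_assoc inner_diff_right)
    thus ?thesis
      using esym_minus_outer[of "k + 1" P v w] unfolding eL D_def
      by (simp add: algebra_simps inner_commute)
  qed
  have row: "(a - v \<bullet> w) *\<^sub>R (- (?Yp *v w)) + transpose S *v w = Ymat k P *v w"
  proof -
    have "transpose S *v w = Ymat k P *v w - (v \<bullet> w) *\<^sub>R (?Yp *v w) + a *\<^sub>R (?Yp *v w)"
      using transpose_Ymat_minus_outer_mult[OF P, where k=k and v=v]
      by (simp add: S_def D_def w_def transpose_diff transpose_add transpose_scalar transpose_outer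
          matrix_vector_mult_add_rdistrib matrix_vector_mult_diff_rdistrib scaleR_matrix_vector_mult
          outer_matrix_vector_mult YpT inner_commute del: transpose_matrix_vector)
    thus ?thesis by (simp add: algebra_simps)
  qed
  have column: "?e *\<^sub>R (- w) + P *v (P *v (?Yp *v v)) = - (P *v (Ymat k P *v v))"
    unfolding YP by (simp add: matrix_vector_mult_diff_rdistrib scaleR_matrix_vector_mult
        matrix_vector_mul_assoc w_def matrix_vector_right_distrib algebra_simps)
  have block: "esym (k + 1) ?L *\<^sub>R mat 1 - (outer (- w) (- (?Yp *v w)) + P ** S)
      = Ymat (k + 1) D - outer v (Ymat k P *v w) + a *\<^sub>R Ymat k P"
  proof -
    have "P ** ?Yp = ?e *\<^sub>R mat 1 - Ymat k P" using YP by simp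
    hence PS: "P ** S = P ** ?Yd - outer w (?Yp *v w) + a *\<^sub>R (?e *\<^sub>R mat 1 - Ymat k P)"
      by (simp add: S_def matrix_mul_algebra matrix_mul_outer w_def)
    have YD: "Ymat (k + 1) D = esym (k + 1) D *\<^sub>R mat 1 - P ** ?Yd + outer v (Ymat k P *v w)"
      using Ymat_minus_outer_sym[OF P, where v=v and k="k + 1"] by (simp add: D_def w_def diff_eq_eq)
    show ?thesis unfolding eL PS YD by (simp add: outer_neg algebra_simps)
  qed
  show ?thesis
    using corner row column block
    unfolding R_def Sblock_def scaleR_mat_1_bordered bordered_mult bordered_diff
    unfolding w_def[symmetric] S_def[symmetric] bordered_eq_iff
    by (simp add: mat_bordered algebra_simps)
qed

lemma Ymat_Sblock:
  fixes P :: "real^'s^('s::finite)" and v :: "real^'s"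
  assumes P: "transpose P = P"
  defines "w \<equiv> P *v v"
  defines "D \<equiv> P - outer v w"
  shows "Ymat k (Sblock a v P)
      = bordered (esym k P) (- (Ymat (k - 1) P *v w)) (P *v (Ymat (k - 1) P *v v))
            (Ymat k D - outer v (Ymat (k - 1) P *v w) + a *\<^sub>R Ymat (k - 1) P)"
proof (cases "k < 0")
  case True thus ?thesis by (simp add: Ymat_neg zero_bordered)
next
  case False
  hence "0 \<le> k" by simp
  thus ?thesis
  proof (induction k rule: int_ge_induct)
    case base thus ?case by (simp add: Ymat_0 Ymat_neg mat_bordered)
  next
    case (step i)
    show ?case
      using Ymat_rec[of "i + 1" "Sblock a v P"] step.IH Ymat_Sblock_step[OF P, where k=i and v=v and a=a]
      by (simp add: w_def D_def)
  qed
qed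

lemma Xi_bordered: "Xi \<xi> = bordered 1 0 \<xi> (mat 1)"
  by (simp add: Xi_def bordered_def mat_def vec_eq_iff split: option.split)

lemma blockdiag_bordered: "blockdiag a X = bordered a 0 0 X"
  by (simp add: blockdiag_def bordered_def vec_eq_iff split: option.split)

lemma nup_bvec: "nup A sh = bvec (1 / A) (- (1 / A) *\<^sub>R sh)"
  by (simp add: nup_def bvec_def vec_eq_iff split: option.split)

lemma perp_bordered: "A \<noteq> 0 \<Longrightarrow> perp A sh = bordered 0 0 sh (mat 1)"
  by (simp add: perp_def nup_def ndn_def bordered_def mat_def vec_eq_iff split: option.split)

text \<open>\<open>frame A \<epsilon> sh\<close> is the vielbein of \<open>adm (-A\<^sup>2) (\<epsilon>\<^sup>T\<epsilon>) sh\<close> (lapse \<open>A\<close>, spatial vielbein \<open>\<epsilon>\<close>,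
  shift \<open>sh\<close>), mapping coordinate components to the orthonormal frame.\<close>

definition frame :: "real \<Rightarrow> real^'s^'s \<Rightarrow> real^'s \<Rightarrow> real^('s::finite option)^('s option)" where
  "frame A \<epsilon> sh = bordered A 0 (\<epsilon> *v sh) \<epsilon>"

definition minkowski :: "real^('s::finite option)^('s option)" where
  "minkowski = bordered (-1) 0 0 (mat 1)"

lemma minkowski_mult: "minkowski ** bordered a r c A = bordered (- a) (- r) c A"
  by (simp add: minkowski_def bordered_mult)

lemma minkowski_mult_minkowski: "minkowski ** minkowski = (mat 1 :: real^('s::finite option)^('s option))"
  by (simp add: minkowski_def bordered_mult mat_bordered)

lemma adm_frame:
  "adm (- (A^2)) (transpose \<epsilon> ** \<epsilon>) sh = transpose (frame A \<epsilon> sh) ** minkowski ** frame A \<epsilon> sh"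
proof -
  have f: "frame A \<epsilon> sh = bordered A 0 0 \<epsilon> ** Xi sh"
    by (simp add: frame_def Xi_bordered bordered_mult)
  have "transpose (bordered A 0 0 \<epsilon>) ** minkowski ** bordered A 0 0 \<epsilon>
      = blockdiag (- (A^2)) (transpose \<epsilon> ** \<epsilon>)"
    by (simp add: transpose_bordered minkowski_def bordered_mult blockdiag_bordered power2_eq_square)
  moreover have "transpose (frame A \<epsilon> sh) ** minkowski ** frame A \<epsilon> sh
      = transpose (Xi sh) ** (transpose (bordered A 0 0 \<epsilon>) ** minkowski ** bordered A 0 0 \<epsilon>) ** Xi sh"
    unfolding f by (simp add: matrix_transpose_mul matrix_mul_assoc)
  ultimately show ?thesis unfolding adm_def by simp
qed

lemma frame_mult_inverse:
  assumes "A \<noteq> 0" and "invertible \<epsilon>"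
  shows "frame A \<epsilon> sh ** bordered (1 / A) 0 (- (1 / A) *\<^sub>R sh) (matrix_inv \<epsilon>) = mat 1"
  using assms matrix_inv_right[OF assms(2)]
  by (simp add: frame_def bordered_mult mat_bordered scaleR_matrix_vector_mult
      matrix_vector_mult_neg matrix_vector_mult_scaleR)

lemma invertible_frame: "A \<noteq> 0 \<Longrightarrow> invertible \<epsilon> \<Longrightarrow> invertible (frame A \<epsilon> sh)"
  using frame_mult_inverse invertibleI by blast

lemma matrix_inv_frame:
  "A \<noteq> 0 \<Longrightarrow> invertible \<epsilon>
    \<Longrightarrow> matrix_inv (frame A \<epsilon> sh) = bordered (1 / A) 0 (- (1 / A) *\<^sub>R sh) (matrix_inv \<epsilon>)"
  using frame_mult_inverse matrix_inv_unique by blast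

lemma frame_mult_nup: "A \<noteq> 0 \<Longrightarrow> frame A \<epsilon> sh *v nup A sh = bvec 1 0"
  by (simp add: frame_def nup_bvec bordered_mult_bvec scaleR_matrix_vector_mult
      matrix_vector_mult_neg matrix_vector_mult_scaleR)

lemma frame_mult_perp: "A \<noteq> 0 \<Longrightarrow> frame A \<epsilon> sh ** perp A sh = bordered 0 0 (\<epsilon> *v sh) \<epsilon>"
  by (simp add: frame_def perp_bordered bordered_mult)

lemma invertible_adm:
  fixes \<epsilon> :: "real^'s^('s::finite)"
  assumes "A \<noteq> 0" and "invertible \<epsilon>"
  shows "invertible (adm (- (A^2)) (transpose \<epsilon> ** \<epsilon>) sh)"
proof -
  have "invertible (minkowski :: real^('s option)^('s option))"
    using minkowski_mult_minkowski by (rule invertibleI)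
  hence "invertible (transpose (frame A \<epsilon> sh) ** minkowski ** frame A \<epsilon> sh)"
    using invertible_frame[OF assms] by (intro invertible_mult transpose_invertible)
  thus ?thesis by (simp add: adm_frame)
qed

lemma matrix_inv_adm:
  assumes A: "A \<noteq> 0" and e: "invertible \<epsilon>"
  shows "matrix_inv (adm (- (A^2)) (transpose \<epsilon> ** \<epsilon>) sh)
       = matrix_inv (frame A \<epsilon> sh) ** minkowski ** transpose (matrix_inv (frame A \<epsilon> sh))"
proof (rule matrix_inv_unique)
  let ?E = "frame A \<epsilon> sh"
  have E: "invertible ?E" using invertible_frame[OF A e] .
  have "adm (- (A^2)) (transpose \<epsilon> ** \<epsilon>) sh ** (matrix_inv ?E ** minkowski ** transpose (matrix_inv ?E))
      = transpose ?E ** minkowski ** (?E ** matrix_inv ?E) ** minkowski ** transpose (matrix_inv ?E)"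
    unfolding adm_frame by (simp add: matrix_mul_assoc)
  also have "\<dots> = transpose (matrix_inv ?E ** ?E)"
    using matrix_inv_right[OF E]
    by (simp add: matrix_mul_assoc[symmetric] minkowski_mult_minkowski matrix_transpose_mul)
  finally show "adm (- (A^2)) (transpose \<epsilon> ** \<epsilon>) sh
      ** (matrix_inv ?E ** minkowski ** transpose (matrix_inv ?E)) = mat 1"
    using matrix_inv_left[OF E] by simp
qed

lemma adm_mult_frame_similar:
  assumes A: "A \<noteq> 0" and e: "invertible \<epsilon>"
  shows "adm (- (A^2)) (transpose \<epsilon> ** \<epsilon>) sh ** (matrix_inv (frame A \<epsilon> sh) ** B ** frame A \<epsilon> sh)
      = transpose (frame A \<epsilon> sh) ** (minkowski ** B ** frame A \<epsilon> sh)"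
proof -
  let ?E = "frame A \<epsilon> sh"
  have "adm (- (A^2)) (transpose \<epsilon> ** \<epsilon>) sh ** (matrix_inv ?E ** B ** ?E)
      = transpose ?E ** minkowski ** (?E ** matrix_inv ?E) ** B ** ?E"
    unfolding adm_frame by (simp add: matrix_mul_assoc)
  thus ?thesis using matrix_inv_right[OF invertible_frame[OF A e]] by (simp add: matrix_mul_assoc)
qed

lemma proj_rho_frame:
  assumes A: "A \<noteq> 0" and e: "invertible \<epsilon>"
  shows "proj_rho (adm (- (A^2)) (transpose \<epsilon> ** \<epsilon>) sh) A sh
      (matrix_inv (frame A \<epsilon> sh) ** bordered y r c X ** frame A \<epsilon> sh) = - y"
proof -
  let ?E = "frame A \<epsilon> sh"
  have "(minkowski ** bordered y r c X ** ?E) *v nup A sh = bvec (- y) c"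
    by (simp add: matrix_vector_mul_assoc[symmetric] frame_mult_nup[OF A] minkowski_mult
        bordered_mult_bvec)
  thus ?thesis
    unfolding proj_rho_def adm_mult_frame_similar[OF A e] matrix_vector_mul_assoc[symmetric]
    by (simp add: inner_matrix_vector_mult[symmetric] frame_mult_nup[OF A] inner_bvec
        del: transpose_matrix_vector)
qed

lemma proj_j_frame:
  assumes A: "A \<noteq> 0" and e: "invertible \<epsilon>"
  shows "proj_j (adm (- (A^2)) (transpose \<epsilon> ** \<epsilon>) sh) A sh
      (matrix_inv (frame A \<epsilon> sh) ** bordered y r c X ** frame A \<epsilon> sh) = - (transpose \<epsilon> *v c)"
proof -
  let ?E = "frame A \<epsilon> sh"
  have perp: "transpose (perp A sh) *v (transpose ?E *v z)
      = transpose (bordered 0 0 (\<epsilon> *v sh) \<epsilon>) *v z" for z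
    by (simp add: matrix_vector_mul_assoc matrix_transpose_mul[symmetric] frame_mult_perp[OF A]
        del: transpose_matrix_vector)
  show ?thesis
    unfolding proj_j_def adm_mult_frame_similar[OF A e] matrix_vector_mul_assoc[symmetric] perp
      frame_mult_nup[OF A]
    by (simp add: transpose_bordered bordered_mult_bvec vec_eq_iff minkowski_def
        del: transpose_matrix_vector)
qed

lemma proj_J_frame:
  assumes A: "A \<noteq> 0" and e: "invertible \<epsilon>"
  shows "proj_J (adm (- (A^2)) (transpose \<epsilon> ** \<epsilon>) sh) A sh (transpose \<epsilon> ** \<epsilon>)
      (matrix_inv (frame A \<epsilon> sh) ** bordered y r c X ** frame A \<epsilon> sh) = matrix_inv \<epsilon> ** X ** \<epsilon>"
proof -
  let ?E = "frame A \<epsilon> sh"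
  have "transpose (perp A sh) ** (transpose ?E ** (minkowski ** bordered y r c X ** ?E)) ** perp A sh
      = transpose (?E ** perp A sh) ** (minkowski ** bordered y r c X) ** (?E ** perp A sh)"
    by (simp add: matrix_transpose_mul matrix_mul_assoc)
  hence "(\<chi> i l. (transpose (perp A sh) ** (transpose ?E ** (minkowski ** bordered y r c X ** ?E))
      ** perp A sh) $ Some i $ Some l) = transpose \<epsilon> ** X ** \<epsilon>"
    by (simp add: frame_mult_perp[OF A] transpose_bordered minkowski_mult bordered_mult vec_eq_iff)
  moreover have "matrix_inv (transpose \<epsilon> ** \<epsilon>) = matrix_inv \<epsilon> ** transpose (matrix_inv \<epsilon>)"
    using matrix_inv_mult[OF transpose_invertible[OF e] e] matrix_inv_transpose[OF e] by simp
  moreover have "matrix_inv \<epsilon> ** transpose (matrix_inv \<epsilon>) ** (transpose \<epsilon> ** X ** \<epsilon>)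
      = matrix_inv \<epsilon> ** transpose (\<epsilon> ** matrix_inv \<epsilon>) ** X ** \<epsilon>"
    by (simp add: matrix_transpose_mul matrix_mul_assoc)
  ultimately show ?thesis
    unfolding proj_J_def adm_mult_frame_similar[OF A e] using matrix_inv_right[OF e] by simp
qed

lemma transpose_adm: "transpose X = X \<Longrightarrow> transpose (adm a X q) = adm a X q"
  by (simp add: adm_def matrix_transpose_mul matrix_mul_assoc blockdiag_bordered transpose_bordered)

lemma Xi_mult_matrix_inv_frame:
  assumes A: "A \<noteq> 0" and e: "invertible \<epsilon>"
  shows "Xi q ** matrix_inv (frame A \<epsilon> (q + A *\<^sub>R (matrix_inv \<epsilon> *v w)))
    = bordered (1 / A) 0 (- (matrix_inv \<epsilon> *v w)) (matrix_inv \<epsilon>)"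
proof -
  have "(1 / A) *\<^sub>R q - (1 / A) *\<^sub>R (q + A *\<^sub>R (matrix_inv \<epsilon> *v w)) = - (matrix_inv \<epsilon> *v w)"
    using A by (simp add: algebra_simps)
  thus ?thesis unfolding matrix_inv_frame[OF A e] Xi_bordered bordered_mult by simp
qed

lemma adm_inv_mult_adm:
  fixes \<epsilon> C :: "real^'s^('s::finite)" and q w :: "real^'s" and A H :: real
  assumes A: "A \<noteq> 0" and e: "invertible \<epsilon>" and C: "transpose C = C"
  defines "sh \<equiv> q + A *\<^sub>R (matrix_inv \<epsilon> *v w)"
  defines "P \<equiv> transpose (matrix_inv \<epsilon>) ** C ** matrix_inv \<epsilon>"
  shows "matrix_inv (adm (- (A^2)) (transpose \<epsilon> ** \<epsilon>) sh) ** adm (- H) C q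
       = matrix_inv (frame A \<epsilon> sh) ** Sblock (H / A^2) w P ** frame A \<epsilon> sh"
proof -
  let ?E = "frame A \<epsilon> sh" and ?ei = "matrix_inv \<epsilon>"
  have E: "invertible ?E" using invertible_frame[OF A e] .
  have XiE: "Xi q ** matrix_inv ?E = bordered (1 / A) 0 (- (?ei *v w)) ?ei"
    unfolding sh_def by (rule Xi_mult_matrix_inv_frame[OF A e])
  have Pw: "transpose ?ei *v (C *v (?ei *v w)) = P *v w"
    by (simp add: P_def matrix_vector_mul_assoc matrix_mul_assoc
        del: transpose_matrix_vector vector_transpose_matrix)
  have wPw: "(?ei *v w) \<bullet> (C *v (?ei *v w)) = w \<bullet> (P *v w)"
    using Pw by (simp add: inner_matrix_vector_mult del: transpose_matrix_vector vector_transpose_matrix)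
  have "minkowski ** transpose (matrix_inv ?E) ** adm (- H) C q ** matrix_inv ?E
      = minkowski ** (transpose (Xi q ** matrix_inv ?E) ** blockdiag (- H) C ** (Xi q ** matrix_inv ?E))"
    unfolding adm_def by (simp add: matrix_transpose_mul matrix_mul_assoc)
  also have "\<dots> = Sblock (H / A^2) w P"
    unfolding XiE Sblock_def using Pw wPw
    by (simp add: transpose_bordered blockdiag_bordered bordered_mult minkowski_mult
        matrix_vector_mult_neg C P_def inner_commute matrix_mul_assoc matrix_vector_mul_assoc
        matrix_transpose_mul power2_eq_square del: transpose_matrix_vector vector_transpose_matrix)
  finally have core: "minkowski ** transpose (matrix_inv ?E) ** adm (- H) C q ** matrix_inv ?E
      = Sblock (H / A^2) w P" .
  have "M ** matrix_inv ?E ** ?E = M" for M :: "real^('s option)^('s option)"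
    by (simp only: matrix_mul_assoc[symmetric] matrix_inv_left[OF E] matrix_mul_rid)
  hence "matrix_inv (adm (- (A^2)) (transpose \<epsilon> ** \<epsilon>) sh) ** adm (- H) C q
      = matrix_inv ?E ** (minkowski ** transpose (matrix_inv ?E) ** adm (- H) C q ** matrix_inv ?E) ** ?E"
    unfolding matrix_inv_adm[OF A e] by (simp add: matrix_mul_assoc)
  thus ?thesis unfolding core .
qed

text \<open>If, in the frames of \<open>g\<close> and \<open>f\<close>, the symmetric \<open>h\<close> is a Lorentz transformation, then
  \<open>h f\<^sup>-\<^sup>1 h = g\<close>, i.e. \<open>(g\<^sup>-\<^sup>1h)\<^sup>-\<^sup>1 = f\<^sup>-\<^sup>1h\<close>.\<close>

lemma matrix_inv_adm_inv_mult_adm: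
  fixes h :: "real^('s::finite option)^('s option)" and e m :: "real^'s^'s"
    and N M :: real and Nsh Msh :: "real^'s"
  assumes N: "N \<noteq> 0" and M: "M \<noteq> 0" and e: "invertible e" and m: "invertible m"
  defines "E \<equiv> frame N e Nsh" and "F \<equiv> frame M m Msh"
  defines "g \<equiv> adm (- (N^2)) (transpose e ** e) Nsh" and "f \<equiv> adm (- (M^2)) (transpose m ** m) Msh"
  assumes h: "transpose h = h"
    and lorentz: "transpose (matrix_inv E) ** h ** matrix_inv F ** minkowski
      ** transpose (transpose (matrix_inv E) ** h ** matrix_inv F) = minkowski"
  shows "matrix_inv (matrix_inv g ** h) = matrix_inv f ** h"
proof (rule matrix_inv_unique)
  let ?H = "transpose (matrix_inv E) ** h ** matrix_inv F"
  have E: "invertible E" unfolding E_def by (rule invertible_frame[OF N e])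
  have F: "invertible F" unfolding F_def by (rule invertible_frame[OF M m])
  have hE: "h = transpose E ** ?H ** F"
  proof -
    have "transpose E ** ?H ** F = transpose (matrix_inv E ** E) ** h ** (matrix_inv F ** F)"
      by (simp add: matrix_transpose_mul matrix_mul_assoc)
    thus ?thesis using matrix_inv_left[OF E] matrix_inv_left[OF F] by simp
  qed
  have f_inv: "matrix_inv f = matrix_inv F ** minkowski ** transpose (matrix_inv F)"
    unfolding f_def F_def by (rule matrix_inv_adm[OF M m])
  have "h ** matrix_inv f ** h = h ** matrix_inv f ** transpose h" by (simp only: h)
  also have "\<dots> = transpose E ** ?H ** (F ** matrix_inv F) ** minkowski
      ** transpose (F ** matrix_inv F) ** transpose ?H ** E"
    unfolding f_inv by (subst (1) hE, subst (2) hE) (simp add: matrix_transpose_mul matrix_mul_assoc)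
  also have "\<dots> = transpose E ** (?H ** minkowski ** transpose ?H) ** E"
    using matrix_inv_right[OF F] by (simp add: matrix_mul_assoc)
  also have "\<dots> = transpose E ** minkowski ** E" by (simp only: lorentz)
  also have "\<dots> = g" by (simp add: g_def E_def adm_frame)
  finally have "h ** matrix_inv f ** h = g" .
  moreover have "invertible g" unfolding g_def by (rule invertible_adm[OF N e])
  ultimately have "matrix_inv g ** (h ** matrix_inv f ** h) = mat 1"
    using matrix_inv_left by simp
  thus "matrix_inv g ** h ** (matrix_inv f ** h) = mat 1" by (simp add: matrix_mul_assoc)
qed

section \<open>The boost \<open>\<Lambda>\<close>\<close>

text \<open>\<open>Lh\<close> is the closed form of \<open>\<Lambda>\<^sup>^ = (I - vv\<^sup>T)\<^sup>-\<^sup>1\<^sup>/\<^sup>2\<close>, with \<open>kap = \<lambda>\<^sup>2/(1 + \<lambda>)\<close>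
  chosen so that \<open>Lh\<^sup>2 = I + \<lambda>\<^sup>2 vv\<^sup>T = G\<^sup>-\<^sup>1\<close>.\<close>

locale boost =
  fixes v :: "real^'s::finite"
  assumes vv: "v \<bullet> v < 1"
begin

definition lam where "lam = 1 / sqrt (1 - v \<bullet> v)"
definition kap where "kap = lam^2 / (1 + lam)"
definition G :: "real^'s^'s" where "G = mat 1 - outer v v"
definition Lh :: "real^'s^'s" where "Lh = mat 1 + kap *\<^sub>R outer v v"

lemma lam_pos: "lam > 0"
  using vv by (simp add: lam_def)

lemma lam_sq: "lam^2 * (1 - v \<bullet> v) = 1"
  using vv by (simp add: lam_def power_divide)

lemma vv_eq: "v \<bullet> v = 1 - 1 / lam^2"
  using lam_sq lam_pos by (simp add: field_simps)

lemma kap_vv: "kap * (v \<bullet> v) = lam - 1"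
proof -
  have "kap * (v \<bullet> v) = lam^2 / (1 + lam) * (1 - 1 / lam^2)" by (simp only: kap_def vv_eq)
  also have "\<dots> = (lam^2 * (1 - 1 / lam^2)) / (1 + lam)" by simp
  also have "lam^2 * (1 - 1 / lam^2) = lam^2 - 1" using lam_pos by (simp add: right_diff_distrib)
  also have "lam^2 - 1 = (lam - 1) * (1 + lam)" by (simp add: power2_eq_square algebra_simps)
  also have "(lam - 1) * (1 + lam) / (1 + lam) = lam - 1" using lam_pos by simp
  finally show ?thesis .
qed

lemma kap_sq: "2 * kap + kap^2 * (v \<bullet> v) = lam^2"
proof -
  have "kap^2 * (v \<bullet> v) = kap * (lam - 1)" using kap_vv by (simp add: power2_eq_square)
  thus ?thesis using lam_pos unfolding kap_def by (simp add: field_simps power2_eq_square)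
qed

lemma G_mult_inverse: "G ** (mat 1 + lam^2 *\<^sub>R outer v v) = mat 1"
proof -
  have "G ** (mat 1 + lam^2 *\<^sub>R outer v v) = mat 1 + (lam^2 - 1 - lam^2 * (v \<bullet> v)) *\<^sub>R outer v v"
    by (simp add: G_def matrix_mul_algebra outer_mul_outer algebra_simps)
  also have "lam^2 - 1 - lam^2 * (v \<bullet> v) = 0" using lam_sq by (simp add: algebra_simps)
  finally show "G ** (mat 1 + lam^2 *\<^sub>R outer v v) = mat 1" by simp
qed

lemma matrix_inv_G: "matrix_inv G = mat 1 + lam^2 *\<^sub>R outer v v"
  by (rule matrix_inv_unique[OF G_mult_inverse])

lemma Lh_mult_Lh: "Lh ** Lh = mat 1 + lam^2 *\<^sub>R outer v v"
proof -
  have "Lh ** Lh = mat 1 + (2 * kap + kap^2 * (v \<bullet> v)) *\<^sub>R outer v v"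
    by (simp add: Lh_def matrix_mul_algebra outer_mul_outer) (simp add: vec_eq_iff algebra_simps power2_eq_square)
  thus ?thesis by (simp add: kap_sq)
qed

lemma kap_pos: "kap > 0"
  using lam_pos by (simp add: kap_def)

lemma quadratic_form_Lh: "x \<bullet> (Lh *v x) = x \<bullet> x + kap * (v \<bullet> x)^2"
  by (simp add: Lh_def matrix_vector_mult_add_rdistrib scaleR_matrix_vector_mult outer_matrix_vector_mult inner_add_right
      power2_eq_square inner_commute)

lemma transpose_Lh: "transpose Lh = Lh"
  by (simp add: Lh_def transpose_add transpose_scalar transpose_outer)

lemma posdef_Lh: "posdef Lh"
  unfolding posdef_def
proof (intro conjI allI impI)
  show "transpose Lh = Lh" by (rule transpose_Lh)
  fix x :: "real^'s" assume "x \<noteq> 0"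
  hence "x \<bullet> x > 0" by simp
  thus "x \<bullet> (Lh *v x) > 0" unfolding quadratic_form_Lh using kap_pos by (simp add: add_pos_nonneg)
qed

lemma posdef_sqrt_unique:
  assumes R: "posdef R" and RR: "R ** R = mat 1 + lam^2 *\<^sub>R outer v v"
  shows "R = Lh"
proof -
  let ?A = "mat 1 + lam^2 *\<^sub>R outer v v"
  have cA: "R ** ?A = ?A ** R" unfolding RR[symmetric] by (simp add: matrix_mul_assoc)
  have R0A: "Lh = (1 - kap / lam^2) *\<^sub>R mat 1 + (kap / lam^2) *\<^sub>R ?A"
    using lam_pos by (simp add: Lh_def algebra_simps scaleR_add_right)
  have "R + lam^2 *\<^sub>R (R ** outer v v) = R + lam^2 *\<^sub>R (outer v v ** R)"
    using cA by (simp add: matrix_mul_algebra)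
  hence cO: "R ** outer v v = outer v v ** R" using lam_pos by simp
  have cR: "R ** Lh = Lh ** R"
    by (simp add: Lh_def matrix_mul_algebra cO)
  have "(R - Lh) ** (R + Lh) = R ** R - Lh ** Lh + (R ** Lh - Lh ** R)"
    by (simp add: matrix_mul_algebra matrix_add_ldistrib algebra_simps)
  also have "\<dots> = 0" using RR Lh_mult_Lh cR by simp
  finally have z: "(R - Lh) ** (R + Lh) = 0" .
  have "invertible (R + Lh)"
  proof (rule invertible_if_quadratic_form_pos)
    fix x :: "real^'s" assume "x \<noteq> 0"
    hence "x \<bullet> (R *v x) > 0" "x \<bullet> (Lh *v x) > 0" using R posdef_Lh unfolding posdef_def by auto
    thus "x \<bullet> ((R + Lh) *v x) > 0" by (simp add: matrix_vector_mult_add_rdistrib inner_add_right)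
  qed
  hence "(R - Lh) ** (R + Lh) ** matrix_inv (R + Lh) = R - Lh"
    by (simp add: matrix_mul_assoc[symmetric] matrix_inv_right)
  thus ?thesis using z by simp
qed

lemma inv_sqrt_G: "inv_sqrt G = Lh"
  unfolding inv_sqrt_def matrix_inv_G
proof (rule the_equality)
  show "posdef Lh \<and> Lh ** Lh = mat 1 + lam\<^sup>2 *\<^sub>R outer v v" using posdef_Lh Lh_mult_Lh by simp
  fix R assume "posdef R \<and> R ** R = mat 1 + lam\<^sup>2 *\<^sub>R outer v v"
  thus "R = Lh" using posdef_sqrt_unique by blast
qed

lemma Lh_mult_v: "Lh *v v = lam *\<^sub>R v"
  by (simp add: Lh_def matrix_vector_mult_add_rdistrib scaleR_matrix_vector_mult outer_matrix_vector_mult kap_vv algebra_simps)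

lemma Lh_Lh_G: "Lh ** Lh ** G = mat 1"
  unfolding Lh_mult_Lh using G_mult_inverse matrix_left_right_inverse by blast

lemma det_Lh: "det Lh = lam"
proof -
  have "Lh = mat 1 - outer (- kap *\<^sub>R v) v" by (simp add: Lh_def outer_scaleR outer_neg)
  hence "det Lh = 1 - v \<bullet> (- kap *\<^sub>R v)" by (simp add: det_id_minus_outer)
  thus ?thesis using kap_vv by (simp add: algebra_simps)
qed

definition boost_matrix :: "real^('s option)^('s option)" where
  "boost_matrix = bordered lam (lam *\<^sub>R v) (lam *\<^sub>R v) Lh"

lemma boost_matrix_lorentz: "boost_matrix ** minkowski ** transpose boost_matrix = minkowski"
proof -
  have l: "lam * lam * (v \<bullet> v) = lam * lam - 1"
    using lam_sq by (simp add: power2_eq_square right_diff_distrib)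
  have l3: "v \<bullet> v + lam * (lam * (v \<bullet> v * (v \<bullet> v))) = lam * (lam * (v \<bullet> v))"
    using l by (metis add.commute diff_add_cancel mult.assoc mult.commute mult.left_neutral
        left_diff_distrib)
  have l4: "lam * (lam * (v \<bullet> v)) - lam * lam = - 1" using l by (simp add: mult.assoc)
  show ?thesis
    by (simp add: boost_matrix_def minkowski_def transpose_bordered bordered_mult transpose_Lh
        Lh_mult_v Lh_mult_Lh outer_scaleR outer_neg mat_bordered power2_eq_square algebra_simps l3 l4)
qed

end

section \<open>The bimetric parametrization\<close>

locale bimetric = boost v for v :: "real^'s::finite" +
  fixes N M :: real and q :: "real^'s" and e m :: "real^'s^'s"
  assumes N: "N > 0" and M: "M > 0" and e: "invertible e" and m: "invertible m"
    and chi_posdef: "posdef (transpose e ** inv_sqrt (mat 1 - outer v v) ** m)"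
begin

abbreviation "ei \<equiv> matrix_inv e"
abbreviation "mi \<equiv> matrix_inv m"
abbreviation "Lhi \<equiv> matrix_inv Lh"

definition "chi = transpose e ** Lh ** m"
definition "HH = N * M / lam"
definition "Nsh = q + N *\<^sub>R (ei *v v)"
definition "Msh = q - M *\<^sub>R (mi *v v)"
definition "g = adm (- (N^2)) (transpose e ** e) Nsh"
definition "f = adm (- (M^2)) (transpose m ** m) Msh"
definition "h = adm (- HH) chi q"
definition "Eg = frame N e Nsh"
definition "Ef = frame M m Msh"
definition "B = ei ** Lh ** m"
definition "Dt = ei ** Lhi ** m"

text \<open>\<open>Pg\<close> and \<open>Pf\<close> are the symmetric blocks of \<open>S\<close> and \<open>S\<^sup>-\<^sup>1\<close> in the frames of \<open>g\<close> and \<open>f\<close>.\<close>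

definition "Pg = Lh ** m ** ei"
definition "Dg = Lhi ** m ** ei"
definition "Pf = Lh ** e ** mi"
definition "Df = Lhi ** e ** mi"

lemma inv_sqrt_eq_Lh: "inv_sqrt (mat 1 - outer v v) = Lh"
  using inv_sqrt_G by (simp add: G_def)

lemma transpose_chi: "transpose chi = chi"
  using chi_posdef unfolding posdef_def chi_def inv_sqrt_eq_Lh by simp

lemma chi_eq: "chi = transpose m ** Lh ** e"
proof -
  have "transpose chi = transpose m ** Lh ** e"
    by (simp add: chi_def matrix_transpose_mul transpose_Lh matrix_mul_assoc)
  thus ?thesis using transpose_chi by simp
qed

lemma chi_frames: "transpose ei ** chi ** mi = Lh"
proof -
  have "transpose ei ** chi ** mi = transpose (e ** ei) ** Lh ** (m ** mi)"
    by (simp add: chi_def matrix_transpose_mul matrix_mul_assoc)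
  thus ?thesis by (simp add: matrix_inv_right[OF e] matrix_inv_right[OF m])
qed

lemma invertible_Lh: "invertible Lh"
  using Lh_Lh_G invertibleI by (metis matrix_mul_assoc)

lemma e_cancel: "X ** e ** ei = X" "X ** ei ** e = X" "e ** (ei ** X) = X" "ei ** (e ** X) = X"
    "e *v (ei *v x) = x" "ei *v (e *v x) = x"
  using matrix_inv_left[OF e] matrix_inv_right[OF e]
  by (simp_all add: matrix_mul_assoc[symmetric] matrix_vector_mul_assoc) (simp_all add: matrix_mul_assoc)

lemma m_cancel: "X ** m ** mi = X" "X ** mi ** m = X" "m ** (mi ** X) = X" "mi ** (m ** X) = X"
    "m *v (mi *v x) = x" "mi *v (m *v x) = x"
  using matrix_inv_left[OF m] matrix_inv_right[OF m]
  by (simp_all add: matrix_mul_assoc[symmetric] matrix_vector_mul_assoc) (simp_all add: matrix_mul_assoc)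

lemma Lh_cancel: "X ** Lh ** Lhi = X" "X ** Lhi ** Lh = X" "Lh ** (Lhi ** X) = X" "Lhi ** (Lh ** X) = X"
    "Lh *v (Lhi *v x) = x" "Lhi *v (Lh *v x) = x"
  using matrix_inv_left[OF invertible_Lh] matrix_inv_right[OF invertible_Lh]
  by (simp_all add: matrix_mul_assoc[symmetric] matrix_vector_mul_assoc) (simp_all add: matrix_mul_assoc)

lemma G_eq: "G = Lhi ** Lhi"
proof -
  have "Lhi ** Lhi ** (Lh ** Lh ** G) = G"
    using matrix_inv_left[OF invertible_Lh]
    by (simp add: matrix_mul_assoc) (simp add: matrix_mul_assoc[symmetric])
  thus ?thesis using Lh_Lh_G by simp
qed

lemma Lhi_mult_v: "Lhi *v v = (1 / lam) *\<^sub>R v"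
proof -
  have "lam *\<^sub>R (Lhi *v v) = v"
    using Lh_cancel(6)[of v] Lh_mult_v by (simp add: matrix_vector_mult_scaleR)
  thus ?thesis using lam_pos by (metis divide_inverse_commute mult_1 scaleR_scaleR
        eq_vector_fraction_iff order_less_irrefl)
qed

lemma Pg_eq: "Pg = transpose ei ** chi ** ei"
proof -
  have "transpose ei ** chi ** ei = transpose (e ** ei) ** Lh ** m ** ei"
    by (simp add: chi_def matrix_transpose_mul matrix_mul_assoc)
  thus ?thesis by (simp add: matrix_inv_right[OF e] Pg_def)
qed

lemma Pf_eq: "Pf = transpose mi ** chi ** mi"
proof -
  have "transpose mi ** chi ** mi = transpose (m ** mi) ** Lh ** e ** mi"
    by (simp add: chi_eq matrix_transpose_mul matrix_mul_assoc)
  thus ?thesis by (simp add: matrix_inv_right[OF m] Pf_def)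
qed

lemma transpose_Pg: "transpose Pg = Pg"
  unfolding Pg_eq by (simp add: matrix_transpose_mul transpose_chi matrix_mul_assoc)

lemma transpose_Pf: "transpose Pf = Pf"
  unfolding Pf_eq by (simp add: matrix_transpose_mul transpose_chi matrix_mul_assoc)

lemma Pg_minus_outer: "Pg - outer v (Pg *v v) = Dg"
proof -
  have "Pg - outer v (Pg *v v) = G ** Pg"
    using outer_matrix_mul[of v v Pg] transpose_Pg by (simp add: G_def matrix_mul_algebra)
  also have "\<dots> = Dg" by (simp add: G_eq Pg_def Dg_def matrix_mul_assoc Lh_cancel)
  finally show ?thesis .
qed

lemma Pf_minus_outer: "Pf - outer (- v) (Pf *v (- v)) = Df"
proof -
  have "Pf - outer (- v) (Pf *v (- v)) = G ** Pf"
    using outer_matrix_mul[of v v Pf] transpose_Pf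
    by (simp add: G_def matrix_mul_algebra outer_neg matrix_vector_mult_neg)
  also have "\<dots> = Df" by (simp add: G_eq Pf_def Df_def matrix_mul_assoc Lh_cancel)
  finally show ?thesis .
qed

lemma B_similar: "B = ei ** Pg ** matrix_inv ei"
  by (simp add: B_def Pg_def matrix_inv_matrix_inv[OF e] matrix_mul_assoc e_cancel)

lemma Dt_similar: "Dt = ei ** Dg ** matrix_inv ei"
  by (simp add: Dt_def Dg_def matrix_inv_matrix_inv[OF e] matrix_mul_assoc e_cancel)

lemma esym_B: "esym j B = esym j Pg"
  unfolding B_similar by (rule esym_similar[OF invertible_matrix_inv[OF e]])

lemma esym_Dt: "esym j Dt = esym j Dg"
  unfolding Dt_similar by (rule esym_similar[OF invertible_matrix_inv[OF e]])

lemma Ymat_B: "Ymat j B = ei ** Ymat j Pg ** e"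
  using Ymat_similar[OF invertible_matrix_inv[OF e], of j Pg]
  by (simp add: B_similar matrix_inv_matrix_inv[OF e])

lemma Ymat_Dt: "Ymat j Dt = ei ** Ymat j Dg ** e"
  using Ymat_similar[OF invertible_matrix_inv[OF e], of j Dg]
  by (simp add: Dt_similar matrix_inv_matrix_inv[OF e])

lemma Ymat_Dg_mult_v: "Ymat j Dg *v v = Ymat j Pg *v v"
  unfolding Pg_minus_outer[symmetric] by (rule Ymat_minus_outer_mult)

lemma Msh_eq: "Msh = q + M *\<^sub>R (mi *v (- v))"
  by (simp add: Msh_def matrix_vector_mult_neg)

lemma g_inv_mult_h: "matrix_inv g ** h = matrix_inv Eg ** Sblock (M / N / lam) v Pg ** Eg"
proof -
  have "HH / N^2 = M / N / lam" using N by (simp add: HH_def power2_eq_square)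
  thus ?thesis
    using adm_inv_mult_adm[OF _ e transpose_chi, of N q v HH] N
    unfolding g_def h_def Eg_def Nsh_def Pg_eq by simp
qed

lemma f_inv_mult_h: "matrix_inv f ** h = matrix_inv Ef ** Sblock (N / M / lam) (- v) Pf ** Ef"
proof -
  have "HH / M^2 = N / M / lam" using M by (simp add: HH_def power2_eq_square)
  thus ?thesis
    using adm_inv_mult_adm[OF _ m transpose_chi, of M q "- v" HH] M
    unfolding f_def h_def Ef_def Msh_eq Pf_eq by simp
qed

lemma frame_transition: "transpose (matrix_inv Eg) ** h ** matrix_inv Ef = minkowski ** boost_matrix"
proof -
  have XiE: "Xi q ** matrix_inv Eg = bordered (1 / N) 0 (- (ei *v v)) ei"
    unfolding Eg_def Nsh_def using Xi_mult_matrix_inv_frame[OF _ e, of N q v] N by simp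
  have XiF: "Xi q ** matrix_inv Ef = bordered (1 / M) 0 (- (mi *v (- v))) mi"
    unfolding Ef_def Msh_eq using Xi_mult_matrix_inv_frame[OF _ m, of M q "- v"] M by simp
  have chi_v: "transpose ei ** chi *v (mi *v v) = lam *\<^sub>R v"
    using chi_frames Lh_mult_v
    by (simp add: matrix_vector_mul_assoc del: transpose_matrix_vector vector_transpose_matrix)
  hence chi_v': "transpose ei *v (chi *v (mi *v v)) = lam *\<^sub>R v"
    by (simp add: matrix_vector_mul_assoc matrix_mul_assoc
        del: transpose_matrix_vector vector_transpose_matrix)
  have chi_v'': "transpose mi *v (transpose chi *v (ei *v v)) = lam *\<^sub>R v"
  proof -
    have "transpose chi = transpose m ** Lh ** e" using transpose_chi chi_eq by simp
    hence "transpose mi *v (transpose chi *v (ei *v v))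
        = (transpose mi ** transpose m) ** Lh ** (e ** ei) *v v"
      by (simp add: matrix_vector_mul_assoc matrix_mul_assoc
          del: transpose_matrix_vector vector_transpose_matrix)
    moreover have "transpose mi ** transpose m = mat 1"
      using matrix_inv_right[OF m] by (metis matrix_transpose_mul transpose_mat)
    ultimately show ?thesis by (simp add: matrix_inv_right[OF e] Lh_mult_v)
  qed
  have corner: "- (HH / (N * M)) - lam * (v \<bullet> v) = - lam"
  proof -
    have "HH / (N * M) = 1 / lam" using N M lam_pos by (simp add: HH_def)
    moreover have "lam * (v \<bullet> v) = lam - 1 / lam"
      using lam_sq lam_pos by (simp add: field_simps power2_eq_square)
    ultimately show ?thesis by simp
  qed
  have "transpose (matrix_inv Eg) ** h ** matrix_inv Ef
      = transpose (Xi q ** matrix_inv Eg) ** blockdiag (- HH) chi ** (Xi q ** matrix_inv Ef)"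
    unfolding h_def adm_def by (simp add: matrix_transpose_mul matrix_mul_assoc)
  thus ?thesis
    unfolding XiE XiF boost_matrix_def minkowski_mult
    by (simp add: transpose_bordered blockdiag_bordered bordered_mult matrix_vector_mult_neg
        inner_matrix_vector_mult chi_frames chi_v chi_v' chi_v'' corner
        del: transpose_matrix_vector vector_transpose_matrix)
qed

lemma matrix_inv_S: "matrix_inv (matrix_inv g ** h) = matrix_inv f ** h"
  unfolding g_def f_def
proof (rule matrix_inv_adm_inv_mult_adm)
  show "transpose h = h" unfolding h_def by (rule transpose_adm[OF transpose_chi])
  have "minkowski ** boost_matrix ** minkowski ** transpose (minkowski ** boost_matrix)
      = minkowski ** (boost_matrix ** minkowski ** transpose boost_matrix) ** minkowski"
    by (simp add: matrix_transpose_mul minkowski_def transpose_bordered matrix_mul_assoc)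
  thus "transpose (matrix_inv (frame N e Nsh)) ** h ** matrix_inv (frame M m Msh) ** minkowski
      ** transpose (transpose (matrix_inv (frame N e Nsh)) ** h ** matrix_inv (frame M m Msh))
      = minkowski"
    using frame_transition unfolding Eg_def Ef_def
    by (simp add: boost_matrix_lorentz minkowski_mult_minkowski)
qed (use N M e m in auto)

lemma Ymat_g_inv_mult_h:
  "Ymat k (matrix_inv g ** h) = matrix_inv Eg
    ** bordered (esym k Pg) (- (Ymat (k - 1) Pg *v (Pg *v v))) (Pg *v (Ymat (k - 1) Pg *v v))
         (esym k Dg *\<^sub>R mat 1 - Pg ** Ymat (k - 1) Dg + (M / N / lam) *\<^sub>R Ymat (k - 1) Pg)
    ** Eg"
proof -
  have Eg: "invertible Eg" unfolding Eg_def by (rule invertible_frame) (use N e in auto)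
  have "Ymat k (matrix_inv g ** h)
      = Ymat k (matrix_inv Eg ** Sblock (M / N / lam) v Pg ** matrix_inv (matrix_inv Eg))"
    by (simp add: g_inv_mult_h matrix_inv_matrix_inv[OF Eg])
  also have "\<dots> = matrix_inv Eg ** Ymat k (Sblock (M / N / lam) v Pg) ** matrix_inv (matrix_inv Eg)"
    by (rule Ymat_similar[OF invertible_matrix_inv[OF Eg]])
  also have "\<dots> = matrix_inv Eg ** Ymat k (Sblock (M / N / lam) v Pg) ** Eg"
    by (simp add: matrix_inv_matrix_inv[OF Eg])
  finally show ?thesis
    unfolding Ymat_Sblock[OF transpose_Pg] Ymat_minus_outer_sym[OF transpose_Pg]
    unfolding Pg_minus_outer .
qed

lemmas proj_g = proj_rho_frame[of N e Nsh, folded g_def Eg_def]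
  proj_j_frame[of N e Nsh, folded g_def Eg_def] proj_J_frame[of N e Nsh, folded g_def Eg_def]

lemma proj_rho_Vg: "proj_rho g N Nsh (Ymat k (matrix_inv g ** h)) = - esym k B"
  using N e by (simp add: Ymat_g_inv_mult_h proj_g esym_B)

lemma proj_j_Vg:
  "proj_j g N Nsh (Ymat k (matrix_inv g ** h))
    = - ((transpose e ** e) *v ((B ** Ymat (k - 1) Dt) *v (ei *v v)))"
proof -
  have "(B ** Ymat (k - 1) Dt) *v (ei *v v) = ei *v (Pg *v (Ymat (k - 1) Pg *v v))"
    unfolding B_similar Ymat_Dt matrix_inv_matrix_inv[OF e]
    by (simp add: matrix_mul_assoc e_cancel matrix_vector_mul_assoc[symmetric] Ymat_Dg_mult_v)
  hence "(transpose e ** e) *v ((B ** Ymat (k - 1) Dt) *v (ei *v v))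
      = transpose e *v (Pg *v (Ymat (k - 1) Pg *v v))"
    by (simp add: matrix_vector_mul_assoc[symmetric] e_cancel del: transpose_matrix_vector)
  thus ?thesis using N e by (simp add: Ymat_g_inv_mult_h proj_g)
qed

lemma proj_J_Vg:
  "proj_J g N Nsh (transpose e ** e) (Ymat k (matrix_inv g ** h))
    = esym k Dt *\<^sub>R mat 1 - B ** Ymat (k - 1) Dt + (M / N) *\<^sub>R ((1 / lam) *\<^sub>R Ymat (k - 1) B)"
proof -
  have B: "B = ei ** Pg ** e"
    using B_similar by (simp add: matrix_inv_matrix_inv[OF e])
  have "proj_J g N Nsh (transpose e ** e) (Ymat k (matrix_inv g ** h))
      = ei ** (esym k Dg *\<^sub>R mat 1 - Pg ** Ymat (k - 1) Dg + (M / N / lam) *\<^sub>R Ymat (k - 1) Pg) ** e"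
    using N e by (simp add: Ymat_g_inv_mult_h proj_g)
  also have "\<dots> = esym k Dt *\<^sub>R mat 1 - B ** Ymat (k - 1) Dt + (M / N) *\<^sub>R ((1 / lam) *\<^sub>R Ymat (k - 1) B)"
    unfolding Ymat_Dt esym_Dt Ymat_B unfolding B
    by (simp add: matrix_mul_algebra matrix_mul_assoc e_cancel matrix_inv_left[OF e])
  finally show ?thesis .
qed

lemma Ymat_S_inv:
  "Ymat j (matrix_inv (matrix_inv g ** h)) = matrix_inv Ef
    ** bordered (esym j Pf) (- (Ymat (j - 1) Pf *v (Pf *v (- v)))) (Pf *v (Ymat (j - 1) Pf *v (- v)))
         (esym j Df *\<^sub>R mat 1 - Pf ** Ymat (j - 1) Df + (N / M / lam) *\<^sub>R Ymat (j - 1) Pf)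
    ** Ef"
proof -
  have Ef: "invertible Ef" unfolding Ef_def by (rule invertible_frame) (use M m in auto)
  have "Ymat j (matrix_inv (matrix_inv g ** h))
      = Ymat j (matrix_inv Ef ** Sblock (N / M / lam) (- v) Pf ** matrix_inv (matrix_inv Ef))"
    by (simp add: matrix_inv_S f_inv_mult_h matrix_inv_matrix_inv[OF Ef])
  also have "\<dots> = matrix_inv Ef ** Ymat j (Sblock (N / M / lam) (- v) Pf) ** matrix_inv (matrix_inv Ef)"
    by (rule Ymat_similar[OF invertible_matrix_inv[OF Ef]])
  also have "\<dots> = matrix_inv Ef ** Ymat j (Sblock (N / M / lam) (- v) Pf) ** Ef"
    by (simp add: matrix_inv_matrix_inv[OF Ef])
  finally show ?thesis
    unfolding Ymat_Sblock[OF transpose_Pf] Ymat_minus_outer_sym[OF transpose_Pf]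
    unfolding Pf_minus_outer .
qed

lemmas proj_f = proj_rho_frame[of M m Msh, folded f_def Ef_def]
  proj_j_frame[of M m Msh, folded f_def Ef_def] proj_J_frame[of M m Msh, folded f_def Ef_def]

lemma Dg_mult: "Dg ** (e ** mi ** Lh) = mat 1"
  by (simp add: Dg_def matrix_mul_assoc e_cancel m_cancel matrix_inv_left[OF invertible_Lh])

lemma Pg_mult: "Pg ** (e ** mi ** Lhi) = mat 1"
  by (simp add: Pg_def matrix_mul_assoc e_cancel m_cancel matrix_inv_right[OF invertible_Lh])

lemma invertible_Dg: "invertible Dg" and invertible_Pg: "invertible Pg"
  using Dg_mult Pg_mult invertibleI by blast+

text \<open>Through these similarities and the inversion formula, \<open>V\<^sub>f\<close> is expressed by
  \<open>Y\<^sub>k\<^sub>-\<^sub>1(D\<^sup>~)\<close> and \<open>Y\<^sub>k\<^sub>-\<^sub>1(B)\<close>.\<close>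

lemma Pf_similar: "Pf = Lh ** matrix_inv Dg ** matrix_inv Lh"
  unfolding matrix_inv_unique[OF Dg_mult] Pf_def by (simp add: matrix_mul_assoc Lh_cancel)

lemma Df_similar: "Df = Lhi ** matrix_inv Pg ** matrix_inv Lhi"
  unfolding matrix_inv_unique[OF Pg_mult] Df_def matrix_inv_matrix_inv[OF invertible_Lh]
  by (simp add: matrix_mul_assoc Lh_cancel)

lemma inverse_det_Dg: "1 / det Dg = lam * det (e ** mi)"
proof -
  have "det Dg = (1 / lam) * det m * (1 / det e)"
    unfolding Dg_def by (simp add: det_mul det_matrix_inv[OF invertible_Lh] det_Lh det_matrix_inv[OF e])
  thus ?thesis using invertible_det_nz e m lam_pos by (simp add: det_mul det_matrix_inv[OF m])
qed

lemma inverse_det_Pg: "1 / det Pg = det (e ** mi) / lam"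
proof -
  have "det Pg = lam * det m * (1 / det e)"
    unfolding Pg_def by (simp add: det_mul det_Lh det_matrix_inv[OF e])
  thus ?thesis using invertible_det_nz e m lam_pos by (simp add: det_mul det_matrix_inv[OF m])
qed

lemma esym_Pf: "esym (int CARD('s) + 1 - k) Pf = lam * det (e ** mi) * esym (k - 1) Dg"
proof -
  have "esym (int CARD('s) + 1 - k) Pf = esym (int CARD('s) - (k - 1)) (matrix_inv Dg)"
    unfolding Pf_similar esym_similar[OF invertible_Lh] by (simp add: algebra_simps)
  thus ?thesis
    using inverse_det_Dg by (simp add: esym_matrix_inv[OF invertible_Dg] divide_inverse mult_ac)
qed

lemma esym_Df: "esym (int CARD('s) + 1 - k) Df = (det (e ** mi) / lam) * esym (k - 1) Pg"
proof -
  have "esym (int CARD('s) + 1 - k) Df = esym (int CARD('s) - (k - 1)) (matrix_inv Pg)"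
    unfolding Df_similar esym_similar[OF invertible_matrix_inv[OF invertible_Lh]]
    by (simp add: algebra_simps)
  thus ?thesis
    using inverse_det_Pg by (simp add: esym_matrix_inv[OF invertible_Pg] divide_inverse mult_ac)
qed

lemma Ymat_Pf:
  "Ymat (int CARD('s) - k) Pf = Lh ** ((1 / det Dg) *\<^sub>R (Dg ** Ymat (k - 1) Dg)) ** Lhi"
proof -
  have "Ymat (int CARD('s) - k) Pf = Lh ** Ymat (int CARD('s) - k) (matrix_inv Dg) ** Lhi"
    unfolding Pf_similar by (rule Ymat_similar[OF invertible_Lh])
  thus ?thesis using Ymat_matrix_inv[OF invertible_Dg, of k] by simp
qed

lemma Ymat_Df:
  "Ymat (int CARD('s) - k) Df = Lhi ** ((1 / det Pg) *\<^sub>R (Pg ** Ymat (k - 1) Pg)) ** Lh"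
proof -
  have "Ymat (int CARD('s) - k) Df = Lhi ** Ymat (int CARD('s) - k) (matrix_inv Pg) ** matrix_inv Lhi"
    unfolding Df_similar by (rule Ymat_similar[OF invertible_matrix_inv[OF invertible_Lh]])
  thus ?thesis using Ymat_matrix_inv[OF invertible_Pg, of k]
    by (simp add: matrix_inv_matrix_inv[OF invertible_Lh])
qed

lemma proj_rho_Vf:
  "proj_rho f M Msh (Ymat (int CARD('s) + 1 - k) (matrix_inv (matrix_inv g ** h)))
    = - lam * esym (k - 1) Dt * det (e ** mi)"
  using M m by (simp add: Ymat_S_inv proj_f esym_Pf esym_Dt)

lemma proj_j_Vf:
  "proj_j f M Msh (Ymat (int CARD('s) + 1 - k) (matrix_inv (matrix_inv g ** h)))
    = - det (e ** mi) *\<^sub>R proj_j g N Nsh (Ymat k (matrix_inv g ** h))"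
proof -
  let ?x = "Ymat (k - 1) Dg *v v"
  have Y: "Ymat (int CARD('s) - k) Pf *v v = det (e ** mi) *\<^sub>R (Lh *v (Dg *v ?x))"
    unfolding Ymat_Pf using inverse_det_Dg lam_pos
    by (simp add: matrix_vector_mul_assoc[symmetric] Lhi_mult_v scaleR_matrix_vector_mult
        matrix_vector_mult_scaleR)
  have "Pf *v (Lh *v (Dg *v ?x)) = Lh *v ?x"
    by (simp add: Pf_def Dg_def matrix_vector_mul_assoc matrix_mul_assoc e_cancel m_cancel Lh_cancel)
  moreover have "transpose m ** Lh = transpose e ** Pg"
  proof -
    have "transpose m ** Lh = transpose m ** Lh ** e ** ei" by (simp add: e_cancel)
    also have "transpose m ** Lh ** e = transpose e ** Lh ** m" using chi_eq by (simp add: chi_def)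
    finally show ?thesis by (simp add: Pg_def matrix_mul_assoc)
  qed
  hence "transpose m *v (Lh *v ?x) = transpose e *v (Pg *v ?x)"
    by (simp add: matrix_vector_mul_assoc matrix_mul_assoc
        del: transpose_matrix_vector vector_transpose_matrix)
  ultimately have "transpose m *v (Pf *v (Ymat (int CARD('s) - k) Pf *v v))
      = det (e ** mi) *\<^sub>R (transpose e *v (Pg *v (Ymat (k - 1) Pg *v v)))"
    by (simp add: Y Ymat_Dg_mult_v matrix_vector_mult_scaleR
        del: transpose_matrix_vector vector_transpose_matrix)
  thus ?thesis
    using M m N e
    by (simp add: Ymat_S_inv Ymat_g_inv_mult_h proj_f proj_g matrix_vector_mult_neg
        del: transpose_matrix_vector vector_transpose_matrix)
qed

lemma Ymat_B_conj: "mi ** (Lh ** Lh) ** m ** Ymat j B = mi ** Lh ** Ymat j Pg ** Lh ** m"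
proof -
  have "mi ** (Lh ** Lh) ** m ** Ymat j B = mi ** Lh ** (Pg ** Ymat j Pg) ** e"
    by (simp add: Ymat_B Pg_def matrix_mul_assoc e_cancel)
  also have "\<dots> = mi ** Lh ** Ymat j Pg ** (Pg ** e)"
    by (simp add: Ymat_commute matrix_mul_assoc)
  finally show ?thesis by (simp add: Pg_def matrix_mul_assoc e_cancel)
qed

lemma Dt_mult_Ymat_Dt: "Dt ** Ymat j Dt = ei ** Ymat j Dg ** Lhi ** m"
proof -
  have D: "Dt = ei ** Dg ** e" using Dt_similar by (simp add: matrix_inv_matrix_inv[OF e])
  have "Dt ** Ymat j Dt = (ei ** Dg ** e) ** (ei ** Ymat j Dg ** e)"
    unfolding Ymat_Dt by (simp only: D)
  also have "\<dots> = ei ** (Dg ** Ymat j Dg) ** e" by (simp add: matrix_mul_assoc e_cancel)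
  also have "\<dots> = ei ** Ymat j Dg ** (Dg ** e)" by (simp add: Ymat_commute matrix_mul_assoc)
  finally show ?thesis by (simp add: Dg_def matrix_mul_assoc e_cancel)
qed

lemma Pf_mult_Ymat_Df_conj:
  "mi ** (Pf ** Ymat (int CARD('s) - k) Df) ** m = (1 / det Pg) *\<^sub>R (mi ** Lh ** Ymat (k - 1) Pg ** Lh ** m)"
proof -
  have "mi ** (Pf ** Ymat (int CARD('s) - k) Df) ** m
      = (1 / det Pg) *\<^sub>R (mi ** Pf ** Lhi ** Pg ** Ymat (k - 1) Pg ** Lh ** m)"
    unfolding Ymat_Df by (simp add: matrix_mul_algebra matrix_mul_assoc)
  also have "mi ** Pf ** Lhi ** Pg = mi ** Lh"
    by (simp add: Pf_def Pg_def matrix_mul_assoc e_cancel m_cancel Lh_cancel)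
  finally show ?thesis by (simp add: matrix_mul_assoc)
qed

lemma Ymat_Pf_conj:
  "mi ** Ymat (int CARD('s) - k) Pf ** m = (1 / det Dg) *\<^sub>R (ei ** Ymat (k - 1) Dg ** Lhi ** m)"
proof -
  have "mi ** Ymat (int CARD('s) - k) Pf ** m
      = (1 / det Dg) *\<^sub>R (mi ** Lh ** Dg ** Ymat (k - 1) Dg ** Lhi ** m)"
    unfolding Ymat_Pf by (simp add: matrix_mul_algebra matrix_mul_assoc)
  also have "mi ** Lh ** Dg = ei"
    by (simp add: Dg_def matrix_mul_assoc e_cancel m_cancel Lh_cancel matrix_inv_left[OF m])
  finally show ?thesis by (simp add: matrix_mul_assoc)
qed

lemma proj_J_Vf:
  "proj_J f M Msh (transpose m ** m) (Ymat (int CARD('s) + 1 - k) (matrix_inv (matrix_inv g ** h)))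
    = det (e ** mi) *\<^sub>R (((1 / lam) * esym (k - 1) B) *\<^sub>R mat 1
        - mi ** (Lh ** Lh) ** m ** ((1 / lam) *\<^sub>R Ymat (k - 1) B) + (N / M) *\<^sub>R (Dt ** Ymat (k - 1) Dt))"
proof -
  let ?n = "int CARD('s)"
  have "proj_J f M Msh (transpose m ** m) (Ymat (?n + 1 - k) (matrix_inv (matrix_inv g ** h)))
      = mi ** (esym (?n + 1 - k) Df *\<^sub>R mat 1 - Pf ** Ymat (?n - k) Df
          + (N / M / lam) *\<^sub>R Ymat (?n - k) Pf) ** m"
    using M m by (simp add: Ymat_S_inv proj_f)
  also have "\<dots> = esym (?n + 1 - k) Df *\<^sub>R mat 1 - mi ** (Pf ** Ymat (?n - k) Df) ** m
      + (N / M / lam) *\<^sub>R (mi ** Ymat (?n - k) Pf ** m)"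
    by (simp add: matrix_mul_algebra m_cancel matrix_mul_assoc matrix_inv_left[OF m])
  also have "\<dots> = ((det (e ** mi) / lam) * esym (k - 1) Pg) *\<^sub>R mat 1
      - (det (e ** mi) / lam) *\<^sub>R (mi ** Lh ** Ymat (k - 1) Pg ** Lh ** m)
      + (det (e ** mi) * (N / M)) *\<^sub>R (ei ** Ymat (k - 1) Dg ** Lhi ** m)"
    unfolding Pf_mult_Ymat_Df_conj Ymat_Pf_conj esym_Df inverse_det_Pg inverse_det_Dg
    using lam_pos by (simp add: mult_ac)
  also have "\<dots> = det (e ** mi) *\<^sub>R (((1 / lam) * esym (k - 1) B) *\<^sub>R mat 1
      - mi ** (Lh ** Lh) ** m ** ((1 / lam) *\<^sub>R Ymat (k - 1) B) + (N / M) *\<^sub>R (Dt ** Ymat (k - 1) Dt))"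
    unfolding esym_B matrix_mul_scaleR Ymat_B_conj Dt_mult_Ymat_Dt
    using lam_pos by (simp add: scaleR_add_right scaleR_diff_right mult_ac)
  finally show ?thesis .
qed

end

theorem mainTheorem5:
  fixes N M :: real and q v :: "real^'s" and e m :: "real^'s^'s" and k :: int
  assumes "N > 0" and "M > 0" and "v \<bullet> v < 1"
    and "invertible e" and "invertible m"
    and "posdef (transpose e ** inv_sqrt (mat 1 - outer v v) ** m)"
  shows
    "let d = int CARD('s) + 1;
         lam = 1 / sqrt (1 - v \<bullet> v);
         Lh = inv_sqrt (mat 1 - outer v v);
         chi = transpose e ** Lh ** m;
         gam = transpose e ** e;
         phi = transpose m ** m;
         n = matrix_inv e *v v;
         Qt = matrix_inv m ** (Lh ** Lh) ** m;
         Dt = matrix_inv e ** matrix_inv Lh ** m;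
         B = matrix_inv e ** Lh ** m;
         U = (1 / lam) *\<^sub>R Ymat (k - 1) B;
         Ut = Dt ** Ymat (k - 1) Dt;
         W = B ** Ymat (k - 1) Dt;
         V = esym k Dt;
         Vt = (1 / lam) * esym (k - 1) B;
         HH = N * M / lam;
         Nsh = q + N *\<^sub>R (matrix_inv e *v v);
         Msh = q - M *\<^sub>R (matrix_inv m *v v);
         h = adm (- HH) chi q;
         g = adm (- (N ^ 2)) gam Nsh;
         f = adm (- (M ^ 2)) phi Msh;
         S = matrix_inv g ** h;
         Vg = Ymat k S;
         Vf = Ymat (d - k) (matrix_inv S);
         c = det (e ** matrix_inv m)
     in proj_rho g N Nsh Vg = - esym k B
      \<and> proj_j g N Nsh Vg = - (gam *v (W *v n))
      \<and> proj_J g N Nsh gam Vg = V *\<^sub>R mat 1 - W + (M / N) *\<^sub>R U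
      \<and> proj_rho f M Msh Vf = - lam * esym (k - 1) Dt * c
      \<and> proj_j f M Msh Vf = - c *\<^sub>R proj_j g N Nsh Vg
      \<and> proj_J f M Msh phi Vf = c *\<^sub>R (Vt *\<^sub>R mat 1 - Qt ** U + (N / M) *\<^sub>R Ut)"
proof -
  interpret bimetric v N M q e m
    using assms by unfold_locales auto
  note defs = g_def f_def h_def HH_def chi_def Nsh_def Msh_def B_def Dt_def
  show ?thesis
    unfolding Let_def inv_sqrt_eq_Lh lam_def[symmetric]
    using proj_rho_Vg[of k] proj_j_Vg[of k] proj_J_Vg[of k]
      proj_rho_Vf[of k] proj_j_Vf[of k] proj_J_Vf[of k]
    unfolding defs by simp
qed

end
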